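(* Let $\mathbf{X}\in\mathbb{R}^{N_X}$, $\mathbf{Y}\in\mathbb{R}^{N_Y}$ be zero-mean jointly Gaussian, and consider representations $\mathbf{T}_1=\mathbf{A}\mathbf{X}+\boldsymbol{\zeta}_1$, $\mathbf{T}_2=\mathbf{B}\mathbf{X}+\boldsymbol{\zeta}_2$, where $\boldsymbol{\zeta}_1\sim\mathcal N(0,\Sigma_{\zeta_1})$, $\boldsymbol{\zeta}_2\sim\mathcal N(0,\Sigma_{\zeta_2})$ are independent of each other and of $(\mathbf{X},\mathbf{Y})$. For given Lagrange parameters $(\beta,\lambda,\gamma)$ with $\beta,\lambda>0$, $\gamma\ge0$, the self-consistent equations for minimizing $\mathcal{F}=-I(\mathbf{Y};\mathbf{T}_1,\mathbf{T}_2)+\beta I(\mathbf{T}_1;\mathbf{X})+\lambda I(\mathbf{T}_2;\mathbf{X})+\gamma I(\mathbf{T}_1;\mathbf{T}_2)$, restricted to this Gaussian family, yield the following iterative procedure for $(\mathbf{A},\Sigma_{\zeta_1},\mathbf{B},\Sigma_{\zeta_2})$ at iteration $t$ (all quantities with superscript $(t)$ computed from $\mathbf{A}^{(t)},\Sigma_{\zeta_1}^{(t)},\mathbf{B}^{(t)},\Sigma_{\zeta_2}^{(t)}$ via the formulas in the context): $$\Sigma_{\zeta_1}^{-1\,(t+1)}=\Sigma_{T_1}^{-1\,(t)}-\frac{\gamma}{\beta}\Xi_1^{T(t)}\Sigma_{T_2|T_1}^{-1\,(t)}\Xi_1^{(t)}+\frac1\beta\Psi_1^{T(t)}\Sigma_{Y|T_1,T_2}^{-1\,(t)}\Psi_1^{(t)},$$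 $$\mathbf{A}^{(t+1)}=\Sigma_{\zeta_1}^{(t+1)}\Big[-\frac{\gamma}{\beta}\Xi_1^{T(t)}\Sigma_{T_2|T_1}^{-1\,(t)}\mathbf{B}^{(t)}+\frac1\beta\Psi_1^{T(t)}\Sigma_{Y|T_1,T_2}^{-1\,(t)}(\Theta-\Psi_2^{(t)}\mathbf{B}^{(t)})\Big],$$ $$\Sigma_{\zeta_2}^{-1\,(t+1)}=\Sigma_{T_2}^{-1\,(t)}-\frac{\gamma}{\lambda}\Xi_2^{T(t)}\Sigma_{T_1|T_2}^{-1\,(t)}\Xi_2^{(t)}+\frac1\lambda\Psi_2^{T(t)}\Sigma_{Y|T_1,T_2}^{-1\,(t)}\Psi_2^{(t)},$$ $$\mathbf{B}^{(t+1)}=\Sigma_{\zeta_2}^{(t+1)}\Big[-\frac{\gamma}{\lambda}\Xi_2^{T(t)}\Sigma_{T_1|T_2}^{-1\,(t)}\mathbf{A}^{(t+1)}+\frac1\lambda\Psi_2^{T(t)}\Sigma_{Y|T_1,T_2}^{-1\,(t)}(\Theta-\Psi_1^{(t)}\mathbf{A}^{(t+1)})\Big].$$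
   Context: Notation (all for current $\mathbf{A},\mathbf{B},\Sigma_{\zeta_1},\Sigma_{\zeta_2}$): $\Sigma_X$, $\Sigma_{YX}$ are the covariance and cross-covariance of $(\mathbf{X},\mathbf{Y})$; $\Theta=\Sigma_{YX}\Sigma_X^{-1}$; $\Sigma_{Y|X}$ is the conditional covariance of $\mathbf{Y}$ given $\mathbf{X}$. $\Sigma_{T_1}=\mathbf{A}\Sigma_X\mathbf{A}^T+\Sigma_{\zeta_1}$, $\Sigma_{T_2}=\mathbf{B}\Sigma_X\mathbf{B}^T+\Sigma_{\zeta_2}$. $\Sigma_{X|T_1}=(\Sigma_X^{-1}+\mathbf{A}^T\Sigma_{\zeta_1}^{-1}\mathbf{A})^{-1}$, $\Sigma_{X|T_2}=(\Sigma_X^{-1}+\mathbf{B}^T\Sigma_{\zeta_2}^{-1}\mathbf{B})^{-1}$, $\Sigma_{T_2|T_1}=\mathbf{B}\Sigma_{X|T_1}\mathbf{B}^T+\Sigma_{\zeta_2}$, $\Sigma_{T_1|T_2}=\mathbf{A}\Sigma_{X|T_2}\mathbf{A}^T+\Sigma_{\zeta_1}$. $\Xi_1=\mathbf{B}\Sigma_X\mathbf{A}^T\Sigma_{T_1}^{-1}$, $\Xi_2=\mathbf{A}\Sigma_X\mathbf{B}^T\Sigma_{T_2}^{-1}$. $\Psi_1=\Theta(\Sigma_X\mathbf{A}^T\Sigma_{T_1|T_2}^{-1}-\Sigma_X\mathbf{B}^T\Sigma_{T_2|T_1}^{-1}\mathbf{B}\Sigma_X\mathbf{A}^T\Sigma_{T_1}^{-1})$,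 $\Psi_2=\Theta(\Sigma_X\mathbf{B}^T\Sigma_{T_2|T_1}^{-1}-\Sigma_X\mathbf{A}^T\Sigma_{T_1|T_2}^{-1}\mathbf{A}\Sigma_X\mathbf{B}^T\Sigma_{T_2}^{-1})$. $\Sigma_{X|T_1,T_2}=\Sigma_X-\Sigma_X\mathbf{A}^T\Sigma_{T_1|T_2}^{-1}\mathbf{A}\Sigma_X+\Sigma_X\mathbf{A}^T\Sigma_{T_1|T_2}^{-1}\mathbf{A}\Sigma_X\mathbf{B}^T\Sigma_{T_2}^{-1}\mathbf{B}\Sigma_X+\Sigma_X\mathbf{B}^T\Sigma_{T_2|T_1}^{-1}\mathbf{B}\Sigma_X\mathbf{A}^T\Sigma_{T_1}^{-1}\mathbf{A}\Sigma_X-\Sigma_X\mathbf{B}^T\Sigma_{T_2|T_1}^{-1}\mathbf{B}\Sigma_X$, and $\Sigma_{Y|T_1,T_2}=\Theta\Sigma_{X|T_1,T_2}\Theta^T+\Sigma_{Y|X}$. The self-consistent equations referred to are: $p(t_1|x)\propto p(t_1)\exp\{\frac{\gamma}{\beta}D_{KL}[p(\mathbf{T}_2|x)\|p(\mathbf{T}_2|t_1)]-\frac1\beta\mathbb{E}_{\mathbf{T}_2|x}D_{KL}[p(\mathbf{Y}|x)\|p(\mathbf{Y}|t_1,\mathbf{T}_2)]\}$ and the symmetric one for $p(t_2|x)$ (with $\lambda$ in place of $\beta$), iterated by first updating $\mathbf{T}_1$ and then $\mathbf{T}_2$ using the updated $\mathbf{T}_1$. *)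

theory Defs
  imports "HOL-Analysis.Analysis"
begin

definition pos_def :: "real^'n^'n \<Rightarrow> bool" where
  "pos_def M \<longleftrightarrow> transpose M = M \<and> (\<forall>v. v \<noteq> 0 \<longrightarrow> v \<bullet> (M *v v) > 0)"

definition gauss_pdf :: "real^'n \<Rightarrow> real^'n^'n \<Rightarrow> real^'n \<Rightarrow> real" where
  "gauss_pdf m S v =
     exp (- ((v - m) \<bullet> (matrix_inv S *v (v - m))) / 2) / sqrt ((2 * pi) ^ CARD('n) * det S)"

definition KL :: "(real^'n \<Rightarrow> real) \<Rightarrow> (real^'n \<Rightarrow> real) \<Rightarrow> real" where
  "KL p q = (\<integral>v. p v * ln (p v / q v) \<partial>lborel)"

text \<open>Parameters: SX = Sigma_X, SY = Sigma_Y, SYX = Sigma_YX, A, Sz1 = Sigma_zeta1, B, Sz2 = Sigma_zeta2.\<close>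

definition Theta :: "real^'x^'x \<Rightarrow> real^'x^'y \<Rightarrow> real^'x^'y" where
  "Theta SX SYX = SYX ** matrix_inv SX"

definition S_YgX :: "real^'x^'x \<Rightarrow> real^'y^'y \<Rightarrow> real^'x^'y \<Rightarrow> real^'y^'y" where
  "S_YgX SX SY SYX = SY - SYX ** matrix_inv SX ** transpose SYX"

definition S_T :: "real^'x^'x \<Rightarrow> real^'x^'a \<Rightarrow> real^'a^'a \<Rightarrow> real^'a^'a" where
  "S_T SX A Sz = A ** SX ** transpose A + Sz"

definition S_XgT :: "real^'x^'x \<Rightarrow> real^'x^'a \<Rightarrow> real^'a^'a \<Rightarrow> real^'x^'x" where
  "S_XgT SX A Sz = matrix_inv (matrix_inv SX + transpose A ** matrix_inv Sz ** A)"

text \<open>S_T2gT1 SX A Sz1 B Sz2 = Sigma_{T2|T1} = B Sigma_{X|T1} B^T + Sigma_zeta2;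
  by symmetry Sigma_{T1|T2} = S_T2gT1 SX B Sz2 A Sz1.\<close>
definition S_T2gT1 :: "real^'x^'x \<Rightarrow> real^'x^'a \<Rightarrow> real^'a^'a \<Rightarrow> real^'x^'b \<Rightarrow> real^'b^'b \<Rightarrow> real^'b^'b" where
  "S_T2gT1 SX A Sz1 B Sz2 = B ** S_XgT SX A Sz1 ** transpose B + Sz2"

text \<open>Xi1 = Xi SX A Sz1 B, Xi2 = Xi SX B Sz2 A.\<close>
definition Xi :: "real^'x^'x \<Rightarrow> real^'x^'a \<Rightarrow> real^'a^'a \<Rightarrow> real^'x^'b \<Rightarrow> real^'a^'b" where
  "Xi SX A Sz1 B = B ** SX ** transpose A ** matrix_inv (S_T SX A Sz1)"

text \<open>Psi1 = Psi SX SYX A Sz1 B Sz2, Psi2 = Psi SX SYX B Sz2 A Sz1.\<close>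
definition Psi :: "real^'x^'x \<Rightarrow> real^'x^'y \<Rightarrow> real^'x^'a \<Rightarrow> real^'a^'a \<Rightarrow> real^'x^'b \<Rightarrow> real^'b^'b \<Rightarrow> real^'a^'y" where
  "Psi SX SYX A Sz1 B Sz2 = Theta SX SYX **
     (SX ** transpose A ** matrix_inv (S_T2gT1 SX B Sz2 A Sz1)
      - SX ** transpose B ** matrix_inv (S_T2gT1 SX A Sz1 B Sz2) ** B ** SX ** transpose A
          ** matrix_inv (S_T SX A Sz1))"

definition S_XgT12 :: "real^'x^'x \<Rightarrow> real^'x^'a \<Rightarrow> real^'a^'a \<Rightarrow> real^'x^'b \<Rightarrow> real^'b^'b \<Rightarrow> real^'x^'x" where
  "S_XgT12 SX A Sz1 B Sz2 =
     SX
     - SX ** transpose A ** matrix_inv (S_T2gT1 SX B Sz2 A Sz1) ** A ** SX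
     + SX ** transpose A ** matrix_inv (S_T2gT1 SX B Sz2 A Sz1) ** A ** SX ** transpose B
         ** matrix_inv (S_T SX B Sz2) ** B ** SX
     + SX ** transpose B ** matrix_inv (S_T2gT1 SX A Sz1 B Sz2) ** B ** SX ** transpose A
         ** matrix_inv (S_T SX A Sz1) ** A ** SX
     - SX ** transpose B ** matrix_inv (S_T2gT1 SX A Sz1 B Sz2) ** B ** SX"

definition S_YgT12 :: "real^'x^'x \<Rightarrow> real^'y^'y \<Rightarrow> real^'x^'y \<Rightarrow> real^'x^'a \<Rightarrow> real^'a^'a \<Rightarrow> real^'x^'b \<Rightarrow> real^'b^'b \<Rightarrow> real^'y^'y" where
  "S_YgT12 SX SY SYX A Sz1 B Sz2 =
     Theta SX SYX ** S_XgT12 SX A Sz1 B Sz2 ** transpose (Theta SX SYX) + S_YgX SX SY SYX"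

text \<open>sc_rhs SX SY SYX A Sz1 B Sz2 Anew Sznew beta gamma x t1 =
  p(t1) * exp( gamma/beta * KL[p(T2|x) || p(T2|t1)]
               - 1/beta * E_{T2|x} KL[p(Y|x) || p(Y|t1,T2)] ),
  where p(t1), p(T2|t1), p(Y|t1,t2) are the Gaussian (conditional) densities of the
  model with parameters (A,Sz1,B,Sz2), and p(T2|x) = N(Bnew x, Sznew).
  For the T1-update Bnew = B, Sznew = Sz2; for the T2-update (roles swapped) the
  conditional p(T1|x) is the already-updated one.\<close>
definition sc_rhs ::
  "real^'x^'x \<Rightarrow> real^'y^'y \<Rightarrow> real^'x^'y \<Rightarrow> real^'x^'a \<Rightarrow> real^'a^'a \<Rightarrow> real^'x^'b \<Rightarrow> real^'b^'b
   \<Rightarrow> real^'x^'b \<Rightarrow> real^'b^'b \<Rightarrow> real \<Rightarrow> real \<Rightarrow> real^'x \<Rightarrow> real^'a \<Rightarrow> real" where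
  "sc_rhs SX SY SYX A Sz1 B Sz2 Bnew Sznew bet gam x t1 =
     gauss_pdf 0 (S_T SX A Sz1) t1 *
     exp (gam / bet * KL (gauss_pdf (Bnew *v x) Sznew)
                         (gauss_pdf (Xi SX A Sz1 B *v t1) (S_T2gT1 SX A Sz1 B Sz2))
          - 1 / bet * (\<integral>t2. gauss_pdf (Bnew *v x) Sznew t2 *
                 KL (gauss_pdf (Theta SX SYX *v x) (S_YgX SX SY SYX))
                    (gauss_pdf (Psi SX SYX A Sz1 B Sz2 *v t1 + Psi SX SYX B Sz2 A Sz1 *v t2)
                               (S_YgT12 SX SY SYX A Sz1 B Sz2)) \<partial>lborel))"

end

theory Submission
  imports Defs "HOL-Probability.Distributions"
begin

text \<open>Restricted to the Gaussian family, every density in the self-consistent equation for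
  \<open>T\<^sub>1\<close> is Gaussian. The divergence \<open>KL(N(m\<^sub>1, S\<^sub>1) \<parallel> N(m\<^sub>2, S\<^sub>2))\<close> is a quadratic polynomial in
  \<open>m\<^sub>2\<close> with leading part \<open>m\<^sub>2\<^sup>T S\<^sub>2\<inverse> m\<^sub>2 / 2\<close>, and averaging it over a Gaussian \<open>T\<^sub>2\<close>
  keeps it quadratic. Hence the logarithm of the right-hand side is
  \<open>h(x) - t\<^sub>1\<^sup>T M t\<^sub>1 / 2 + t\<^sub>1\<^sup>T N x\<close>, where \<open>M\<close> is the claimed new noise precision
  and \<open>M\<inverse> N\<close> the claimed new encoder, and completing the square identifies it, up to a factor
  depending on \<open>x\<close> only, with the density of \<open>N(M\<inverse> N x, M\<inverse>)\<close>. The \<open>T\<^sub>2\<close>-update is the same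
  computation with the roles of the two representations exchanged.

  The analytic input is \<open>\<integral> exp(-v\<^sup>T P v / 2) dv = ((2\<pi>)\<^sup>n / det P)\<^sup>1\<^sup>/\<^sup>2\<close>, proved by induction
  on the dimension by integrating out one coordinate, which replaces \<open>P\<close> by a Schur complement.
  The algebraic input is that \<open>\<Sigma>\<^sub>Y\<^sub>|\<^sub>T\<^sub>1\<^sub>,\<^sub>T\<^sub>2\<close> is positive definite: by the Woodbury
  identity \<open>\<Sigma>\<^sub>X\<^sub>|\<^sub>T\<^sub>1\<^sub>,\<^sub>T\<^sub>2\<close> is the inverse of \<open>\<Sigma>\<^sub>X\<inverse> + A\<^sup>T \<Sigma>\<^sub>\<zeta>\<^sub>1\<inverse> A + B\<^sup>T \<Sigma>\<^sub>\<zeta>\<^sub>2\<inverse> B\<close>.\<close>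

lemma matrix_inv_right:
  fixes S :: "'a::field^'n^'n"
  assumes "invertible S"
  shows "S ** matrix_inv S = mat 1"
  using assms someI_ex[of "\<lambda>S'. S ** S' = mat 1 \<and> S' ** S = mat 1"]
  unfolding invertible_def matrix_inv_def by blast

lemma matrix_inv_left:
  fixes S :: "'a::field^'n^'n"
  assumes "invertible S"
  shows "matrix_inv S ** S = mat 1"
  using matrix_inv_right[OF assms] matrix_left_right_inverse by blast

lemma matrix_inv_unique:
  fixes S :: "'a::field^'n^'n"
  assumes "S ** S' = mat 1"
  shows "matrix_inv S = S'"
proof -
  have "invertible S" using assms invertible_right_inverse by blast
  then have "matrix_inv S ** (S ** S') = S'"
    by (simp add: matrix_mul_assoc matrix_inv_left)
  then show ?thesis using assms by simp
qed

lemma matrix_inv_inv: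
  fixes S :: "'a::field^'n^'n"
  shows "invertible S \<Longrightarrow> matrix_inv (matrix_inv S) = S"
  using matrix_inv_left matrix_inv_unique by blast

lemma matrix_inv_transpose:
  fixes S :: "'a::field^'n^'n"
  shows "invertible S \<Longrightarrow> matrix_inv (transpose S) = transpose (matrix_inv S)"
  by (metis matrix_inv_left matrix_inv_unique matrix_transpose_mul transpose_mat)

lemma det_matrix_inv:
  fixes S :: "'a::field^'n^'n"
  assumes "invertible S"
  shows "det (matrix_inv S) = 1 / det S"
proof -
  have "det S * det (matrix_inv S) = 1"
    using det_mul[of S "matrix_inv S"] by (simp add: matrix_inv_right[OF assms])
  moreover from this have "det S \<noteq> 0" by auto
  ultimately show ?thesis by (simp add: field_simps)
qed

lemma matrix_add_rdistrib: "(A + B) ** C = A ** C + B ** (C :: 'a::semiring_1^'n^'m)"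
  by (simp add: matrix_matrix_mult_def vec_eq_iff sum.distrib distrib_right)

lemma matrix_diff_rdistrib: "(A - B) ** C = A ** C - B ** (C :: 'a::ring_1^'n^'m)"
  by (simp add: matrix_matrix_mult_def vec_eq_iff sum_subtractf left_diff_distrib)

lemma matrix_diff_ldistrib: "A ** (B - C) = A ** B - A ** (C :: 'a::ring_1^'n^'m)"
  by (simp add: matrix_matrix_mult_def vec_eq_iff sum_subtractf right_diff_distrib)

lemmas matrix_mult_normalize =
  matrix_mul_assoc matrix_add_ldistrib matrix_add_rdistrib matrix_diff_rdistrib matrix_diff_ldistrib

lemma matrix_mul_right_inverse_cancel:
  "S ** S' = mat 1 \<Longrightarrow> Y ** S ** S' = (Y :: 'a::semiring_1^'n^'m)"
  by (metis matrix_mul_assoc matrix_mul_rid)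

lemma matrix_vector_mult_uminus_right:
  fixes A :: "'a::ring_1^'n^'m"
  shows "A *v (- x) = - (A *v x)"
  using matrix_vector_mult_diff_distrib[of A 0 x] by simp

lemma transpose_add: "transpose (A + B) = transpose A + transpose (B :: 'a::plus^'n^'m)"
  by (simp add: transpose_def vec_eq_iff)

lemma transpose_diff: "transpose (A - B) = transpose A - transpose (B :: 'a::minus^'n^'m)"
  by (simp add: transpose_def vec_eq_iff)

lemma transpose_congruence_symmetric:
  "transpose X = X \<Longrightarrow> transpose (B ** X ** transpose A) = A ** X ** transpose (B :: 'a::comm_semiring_1^'n^'m)"
  by (simp add: matrix_transpose_mul matrix_mul_assoc)

lemma inner_matrix_transpose: "((A :: real^'n^'m) *v a) \<bullet> b = a \<bullet> (transpose A *v b)"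
  using dot_lmul_matrix[of a "transpose A" b] by simp

lemma inner_symmetric_matrix:
  "transpose W = W \<Longrightarrow> ((W :: real^'n^'n) *v a) \<bullet> b = a \<bullet> (W *v b)"
  using inner_matrix_transpose[of W a b] by simp

lemma inner_transpose_mult3:
  "t \<bullet> ((transpose A ** B ** C) *v s) = ((A :: real^'a^'b) *v t) \<bullet> ((B :: real^'c^'b) *v (C *v s))"
  using inner_matrix_transpose[of A t "B *v (C *v s)"]
  by (simp only: matrix_vector_mul_assoc matrix_mul_assoc)

definition pos_semidef :: "real^'n^'n \<Rightarrow> bool" where
  "pos_semidef R \<longleftrightarrow> transpose R = R \<and> (\<forall>v. 0 \<le> v \<bullet> (R *v v))"

lemma pos_def_symmetric: "pos_def S \<Longrightarrow> transpose S = S"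
  by (simp add: pos_def_def)

lemma pos_def_inner_pos: "pos_def S \<Longrightarrow> v \<noteq> 0 \<Longrightarrow> v \<bullet> (S *v v) > 0"
  by (simp add: pos_def_def)

lemma pos_def_imp_pos_semidef: "pos_def R \<Longrightarrow> pos_semidef R"
  unfolding pos_semidef_def pos_def_def by (metis inner_zero_left less_eq_real_def)

lemma pos_def_invertible:
  fixes S :: "real^'n^'n"
  assumes "pos_def S"
  shows "invertible S"
proof -
  have "\<forall>x. S *v x = 0 \<longrightarrow> x = 0"
    using pos_def_inner_pos[OF assms] by (metis inner_zero_right less_irrefl)
  then show ?thesis
    using matrix_left_invertible_ker invertible_left_inverse by blast
qed

lemma pos_def_matrix_inv_left: "pos_def S \<Longrightarrow> matrix_inv S ** S = mat 1"
  by (rule matrix_inv_left[OF pos_def_invertible])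

lemma pos_def_matrix_inv_right: "pos_def S \<Longrightarrow> S ** matrix_inv S = mat 1"
  by (rule matrix_inv_right[OF pos_def_invertible])

lemma pos_def_matrix_inv:
  fixes S :: "real^'n^'n"
  assumes "pos_def S"
  shows "pos_def (matrix_inv S)"
  unfolding pos_def_def
proof safe
  have S: "invertible S" by (rule pos_def_invertible[OF assms])
  show "transpose (matrix_inv S) = matrix_inv S"
    using matrix_inv_transpose[OF S] pos_def_symmetric[OF assms] by simp
  fix v :: "real^'n"
  assume "v \<noteq> 0"
  define w where "w = matrix_inv S *v v"
  have Sw: "S *v w = v"
    by (simp add: w_def matrix_vector_mul_assoc matrix_inv_right[OF S])
  then have "w \<noteq> 0" using \<open>v \<noteq> 0\<close> by auto
  then have "w \<bullet> (S *v w) > 0" by (rule pos_def_inner_pos[OF assms])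
  then show "v \<bullet> (matrix_inv S *v v) > 0" using Sw by (simp add: w_def inner_commute)
qed

lemma pos_semidef_congruence:
  fixes C :: "real^'n^'m"
  assumes "pos_semidef R"
  shows "pos_semidef (C ** R ** transpose C)"
  unfolding pos_semidef_def
proof safe
  show "transpose (C ** R ** transpose C) = C ** R ** transpose C"
    using assms by (simp add: pos_semidef_def transpose_congruence_symmetric)
  fix v
  have "v \<bullet> ((C ** R ** transpose C) *v v) = (transpose C *v v) \<bullet> (R *v (transpose C *v v))"
    using inner_transpose_mult3[of v "transpose C" R "transpose C" v] by simp
  then show "0 \<le> v \<bullet> ((C ** R ** transpose C) *v v)" using assms by (simp add: pos_semidef_def)
qed

lemma pos_def_add_pos_semidef:
  fixes S R :: "real^'n^'n"
  assumes "pos_def S" "pos_semidef R"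
  shows "pos_def (S + R)"
  unfolding pos_def_def
proof safe
  show "transpose (S + R) = S + R"
    using assms by (simp add: transpose_add pos_semidef_def pos_def_def)
  fix v :: "real^'n"
  assume "v \<noteq> 0"
  then have "0 < v \<bullet> (S *v v)" using assms(1) by (simp add: pos_def_def)
  moreover have "0 \<le> v \<bullet> (R *v v)" using assms(2) by (simp add: pos_semidef_def)
  ultimately show "0 < v \<bullet> ((S + R) *v v)"
    by (simp add: matrix_vector_mult_add_rdistrib inner_add_right)
qed

lemma pos_semidef_add_pos_def:
  fixes S R :: "real^'n^'n"
  assumes "pos_semidef R" "pos_def S"
  shows "pos_def (R + S)"
  using pos_def_add_pos_semidef[OF assms(2,1)] by (simp add: add.commute)

lemma pos_def_add_congruence:
  fixes S :: "real^'n^'n" and R :: "real^'m^'m" and C :: "real^'m^'n"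
  assumes "pos_def S" "pos_def R"
  shows "pos_def (S + C ** R ** transpose C)"
  by (intro pos_def_add_pos_semidef pos_semidef_congruence pos_def_imp_pos_semidef assms)

lemma pos_def_coercive:
  fixes P :: "real^'n^'n"
  assumes "pos_def P"
  obtains c where "c > 0" "\<And>v. c * norm v ^ 2 \<le> v \<bullet> (P *v v)"
proof -
  define f where "f v = v \<bullet> (P *v v)" for v :: "real^'n"
  have cont: "continuous_on (sphere 0 1) f"
    unfolding f_def
    by (intro continuous_intros linear_continuous_on matrix_vector_mul_bounded_linear)
  have "sphere (0::real^'n) 1 \<noteq> {}"
    using norm_axis_1[of undefined] by (metis dist_0_norm mem_sphere empty_iff)
  then obtain u0 where u0: "u0 \<in> sphere 0 1" "\<And>u. u \<in> sphere 0 1 \<Longrightarrow> f u0 \<le> f u"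
    using continuous_attains_inf[OF compact_sphere _ cont] by blast
  have "u0 \<noteq> 0" using u0(1) by auto
  then have pos: "f u0 > 0" unfolding f_def by (rule pos_def_inner_pos[OF assms])
  have "f u0 * norm v ^ 2 \<le> f v" for v
  proof (cases "v = 0")
    case False
    define u where "u = v /\<^sub>R norm v"
    have "u \<in> sphere 0 1" using False by (simp add: u_def)
    moreover have "f v = norm v ^ 2 * f u"
    proof -
      have "v = norm v *\<^sub>R u" using False by (simp add: u_def)
      then show ?thesis
        by (metis f_def inner_scaleR_left inner_scaleR_right matrix_vector_mult_scaleR mult.assoc power2_eq_square)
    qed
    ultimately show ?thesis using u0(2) by (metis mult_left_mono zero_le_power2 mult.commute)
  qed (simp add: f_def)
  then show thesis using that pos unfolding f_def by blast
qed

lemma inner_diff_scaled_identity: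
  fixes P :: "real^'n^'n"
  shows "v \<bullet> ((P - d *\<^sub>R mat 1) *v v) = v \<bullet> (P *v v) - d * norm v ^ 2"
  by (simp add: matrix_vector_mult_diff_rdistrib inner_diff_right power2_norm_eq_inner
      scaleR_matrix_vector_assoc[symmetric])

lemma pos_def_diff_scaled_identity:
  fixes P :: "real^'n^'n"
  assumes "pos_def P"
  obtains d where "d > 0" "pos_def (P - d *\<^sub>R mat 1)"
proof -
  obtain c where c: "c > 0" "\<And>v. c * norm v ^ 2 \<le> v \<bullet> (P *v v)"
    using pos_def_coercive[OF assms] by blast
  have "pos_def (P - (c / 2) *\<^sub>R mat 1)"
    unfolding pos_def_def
  proof safe
    show "transpose (P - (c / 2) *\<^sub>R mat 1) = P - (c / 2) *\<^sub>R mat 1"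
      using pos_def_symmetric[OF assms] by (simp add: transpose_diff transpose_scalar)
    fix v :: "real^'n"
    assume "v \<noteq> 0"
    then have "(c / 2) * norm v ^ 2 < c * norm v ^ 2" using c(1) by simp
    then show "v \<bullet> ((P - (c / 2) *\<^sub>R mat 1) *v v) > 0"
      using c(2)[of v] by (simp add: inner_diff_scaled_identity)
  qed
  with c(1) show thesis by (intro that[of "c / 2"]) auto
qed

section \<open>The Gaussian integral\<close>

text \<open>To integrate by induction on the dimension, quadratic forms are taken over a finite
  subset \<open>I\<close> of the index type; \<open>restrict_matrix I M\<close> is \<open>M\<close> on \<open>I \<times> I\<close> and the identity elsewhere,
  so that its determinant is that of the principal submatrix on \<open>I\<close>.\<close>

definition quad_form :: "'n set \<Rightarrow> real^'n^'n \<Rightarrow> ('n \<Rightarrow> real) \<Rightarrow> real" where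
  "quad_form I M x = (\<Sum>i\<in>I. \<Sum>j\<in>I. x i * M$i$j * x j)"

definition pos_def_on :: "'n set \<Rightarrow> real^'n^'n \<Rightarrow> bool" where
  "pos_def_on I M \<longleftrightarrow> (\<forall>i\<in>I. \<forall>j\<in>I. M$i$j = M$j$i) \<and> (\<forall>x. (\<exists>i\<in>I. x i \<noteq> 0) \<longrightarrow> quad_form I M x > 0)"

definition restrict_matrix :: "'n set \<Rightarrow> real^'n^'n \<Rightarrow> real^'n^'n" where
  "restrict_matrix I M = (\<chi> i j. if i \<in> I \<and> j \<in> I then M$i$j else if i = j then 1 else 0)"

definition schur_complement :: "'n \<Rightarrow> real^'n^'n \<Rightarrow> real^'n^'n" where
  "schur_complement k M = (\<chi> i j. M$i$j - M$i$k * M$k$j / M$k$k)"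

lemma det_subtract_row_multiples:
  fixes A :: "'a::comm_ring_1^'n^'n"
  assumes "finite J" "k \<notin> J"
  shows "det (\<chi> r. if r \<in> J then row r A - c r *s row k A else row r A) = det A"
  using assms
proof (induction J rule: finite_induct)
  case empty
  then show ?case by (simp add: row_def vec_lambda_eta)
next
  case (insert i J)
  define A' where "A' = (\<chi> r. if r \<in> J then row r A - c r *s row k A else row r A)"
  have "i \<noteq> k" using insert by auto
  have rows: "row k A' = row k A" "row i A' = row i A"
    using insert by (simp_all add: A'_def row_def)
  have "(\<chi> r. if r \<in> insert i J then row r A - c r *s row k A else row r A)
      = (\<chi> r. if r = i then row i A' + (- c i) *s row k A' else row r A')"
    using insert by (auto simp: vec_eq_iff rows A'_def row_def)
  then show ?case
    using det_row_operation[OF \<open>i \<noteq> k\<close>, of A' "- c i"] insert by (simp add: A'_def)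
qed

lemma det_restrict_matrix_insert:
  fixes M :: "real^'n^'n"
  assumes "finite I" "k \<notin> I" "M$k$k \<noteq> 0"
  shows "det (restrict_matrix (insert k I) M) = M$k$k * det (restrict_matrix I (schur_complement k M))"
proof -
  define E where "E = restrict_matrix (insert k I) M"
  define R where "R = (\<chi> r. if r \<in> I then row r E - (E$r$k / E$k$k) *s row k E else row r E)"
  define R2 where "R2 = (\<chi> r. if r \<in> I then row r (transpose R) - (R$k$r / R$k$k) *s row k (transpose R)
                                         else row r (transpose R))"
  define G where "G = transpose (restrict_matrix I (schur_complement k M))"
  have "det R = det E" unfolding R_def by (rule det_subtract_row_multiples[OF assms(1,2)])
  moreover have "det R2 = det (transpose R)" unfolding R2_def by (rule det_subtract_row_multiples[OF assms(1,2)])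
  text \<open>Clearing row \<open>k\<close> and then column \<open>k\<close> outside the pivot leaves the pivot times the Schur complement.\<close>
  moreover have "R2 = (\<chi> i. if i = k then M$k$k *s row i G else row i G)"
    using assms
    by (auto simp: vec_eq_iff R2_def R_def E_def G_def restrict_matrix_def schur_complement_def row_def transpose_def)
  then have "det R2 = M$k$k * det G"
    by (simp add: det_row_mul row_def vec_lambda_eta)
  ultimately show ?thesis by (simp add: G_def E_def)
qed

lemma quad_form_insert:
  fixes M :: "real^'n^'n"
  assumes "finite I" "k \<notin> I" "\<forall>i\<in>insert k I. \<forall>j\<in>insert k I. M$i$j = M$j$i"
  shows "quad_form (insert k I) M (x(k:=y)) = M$k$k * y^2 + 2 * y * (\<Sum>j\<in>I. M$k$j * x j) + quad_form I M x"
proof -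
  define z where "z = x(k:=y)"
  have z: "\<And>j. j \<in> I \<Longrightarrow> z j = x j" "z k = y" using assms by (auto simp: z_def)
  have sym: "\<And>i. i \<in> I \<Longrightarrow> M$i$k = M$k$i" using assms(3) by blast
  have "quad_form (insert k I) M z
      = (\<Sum>j\<in>insert k I. z k * M$k$j * z j) + (\<Sum>i\<in>I. \<Sum>j\<in>insert k I. z i * M$i$j * z j)"
    unfolding quad_form_def using assms(1,2) by simp
  also have "(\<Sum>j\<in>insert k I. z k * M$k$j * z j) = y * M$k$k * y + y * (\<Sum>j\<in>I. M$k$j * x j)"
    using assms(1,2) by (simp add: z sum_distrib_left mult_ac)
  also have "(\<Sum>i\<in>I. \<Sum>j\<in>insert k I. z i * M$i$j * z j) = (\<Sum>i\<in>I. x i * M$i$k * y) + quad_form I M x"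
    using assms(1,2) by (simp add: z quad_form_def sum.distrib)
  also have "(\<Sum>i\<in>I. x i * M$i$k * y) = y * (\<Sum>j\<in>I. M$k$j * x j)"
    unfolding sum_distrib_left by (rule sum.cong) (simp_all add: sym)
  finally show ?thesis
    unfolding z_def[symmetric] by (simp add: power2_eq_square algebra_simps)
qed

lemma quad_form_schur_complement:
  fixes M :: "real^'n^'n"
  assumes "finite I" "M$k$k \<noteq> 0" "\<forall>i\<in>I. M$i$k = M$k$i"
  shows "quad_form I (schur_complement k M) x = quad_form I M x - (\<Sum>j\<in>I. M$k$j * x j)^2 / M$k$k"
proof -
  have "quad_form I (schur_complement k M) x
      = (\<Sum>i\<in>I. \<Sum>j\<in>I. x i * M$i$j * x j - (x i * M$k$i) * (M$k$j * x j) / M$k$k)"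
    unfolding quad_form_def schur_complement_def using assms(3)
    by (intro sum.cong refl) (simp add: field_simps)
  also have "\<dots> = quad_form I M x - (\<Sum>i\<in>I. \<Sum>j\<in>I. (x i * M$k$i) * (M$k$j * x j)) / M$k$k"
    by (simp add: quad_form_def sum_subtractf sum_divide_distrib)
  also have "(\<Sum>i\<in>I. \<Sum>j\<in>I. (x i * M$k$i) * (M$k$j * x j)) = (\<Sum>j\<in>I. M$k$j * x j)^2"
    by (simp add: power2_eq_square sum_product mult_ac)
  finally show ?thesis .
qed

lemma quad_form_complete_square:
  fixes M :: "real^'n^'n"
  assumes "finite I" "k \<notin> I" "\<forall>i\<in>insert k I. \<forall>j\<in>insert k I. M$i$j = M$j$i" "M$k$k \<noteq> 0"
  shows "quad_form (insert k I) M (x(k:=y))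
       = M$k$k * (y + (\<Sum>j\<in>I. M$k$j * x j) / M$k$k)^2 + quad_form I (schur_complement k M) x"
proof -
  define b where "b = (\<Sum>j\<in>I. M$k$j * x j)"
  have "M$k$k * (y + b / M$k$k)^2 = M$k$k * y^2 + 2 * y * b + b^2 / M$k$k"
    using assms(4) by (simp add: field_simps power2_eq_square)
  moreover have "\<forall>i\<in>I. M$i$k = M$k$i" using assms(3) by blast
  ultimately show ?thesis
    using quad_form_insert[OF assms(1-3)] quad_form_schur_complement[OF assms(1,4)]
    unfolding b_def by simp
qed

lemma pos_def_on_schur_complement:
  fixes M :: "real^'n^'n"
  assumes "finite I" "k \<notin> I" "pos_def_on (insert k I) M"
  shows "M$k$k > 0" "pos_def_on I (schur_complement k M)"
proof -
  have sym: "\<forall>i\<in>insert k I. \<forall>j\<in>insert k I. M$i$j = M$j$i"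
    and pos: "\<And>x. (\<exists>i\<in>insert k I. x i \<noteq> 0) \<Longrightarrow> quad_form (insert k I) M x > 0"
    using assms(3) unfolding pos_def_on_def by blast+
  have "quad_form (insert k I) M ((\<lambda>_. 0)(k:=1)) = M$k$k"
    using quad_form_insert[OF assms(1,2) sym, of "\<lambda>_. 0" 1] by (simp add: quad_form_def)
  moreover have "quad_form (insert k I) M ((\<lambda>_. 0)(k:=1)) > 0" by (rule pos) auto
  ultimately show Mkk: "M$k$k > 0" by simp
  show "pos_def_on I (schur_complement k M)"
    unfolding pos_def_on_def
  proof safe
    fix i j assume "i \<in> I" "j \<in> I"
    then have "M$i$j = M$j$i" "M$i$k = M$k$i" "M$j$k = M$k$j" using sym by blast+
    then show "schur_complement k M $ i $ j = schur_complement k M $ j $ i"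
      by (simp add: schur_complement_def)
  next
    fix x :: "'n \<Rightarrow> real" and i assume "i \<in> I" "x i \<noteq> 0"
    text \<open>The minimiser over the \<open>k\<close>-th coordinate turns the Schur form into the full form.\<close>
    then have "quad_form (insert k I) M (x(k := - (\<Sum>j\<in>I. M$k$j * x j) / M$k$k)) > 0"
      using assms(2) by (intro pos) (auto intro!: bexI[of _ i])
    then show "quad_form I (schur_complement k M) x > 0"
      using Mkk by (simp add: quad_form_complete_square[OF assms(1,2) sym])
  qed
qed

lemma nn_integral_exp_neg_square:
  fixes a c :: real
  assumes "a > 0"
  shows "(\<integral>\<^sup>+y. ennreal (exp (- (a * (y + c)^2) / 2)) \<partial>lborel) = ennreal (sqrt (2 * pi / a))"
proof -
  define s where "s = 1 / sqrt a"
  have "s > 0" using assms by (simp add: s_def)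
  have s2: "s^2 = 1 / a" using assms by (simp add: s_def power_divide)
  have "exp (- (a * (y + c)^2) / 2) = sqrt (2 * pi / a) * normal_density (-c) s y" for y
    using assms unfolding normal_density_def s2 by (simp add: real_sqrt_divide field_simps)
  then have "(\<integral>\<^sup>+y. ennreal (exp (- (a * (y + c)^2) / 2)) \<partial>lborel)
      = (\<integral>\<^sup>+y. ennreal (sqrt (2 * pi / a)) * ennreal (normal_density (-c) s y) \<partial>lborel)"
    using assms by (intro nn_integral_cong) (simp add: ennreal_mult')
  also have "\<dots> = ennreal (sqrt (2 * pi / a)) * (\<integral>\<^sup>+y. ennreal (normal_density (-c) s y) \<partial>lborel)"
    by (rule nn_integral_cmult) simp
  also have "(\<integral>\<^sup>+y. ennreal (normal_density (-c) s y) \<partial>lborel) = 1"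
    using \<open>s > 0\<close> by (simp add: nn_integral_eq_integral)
  finally show ?thesis by simp
qed

lemma nn_integral_exp_quad_form_fun_upd:
  fixes M :: "real^'n^'n"
  assumes "finite I" "k \<notin> I" "pos_def_on (insert k I) M"
  shows "(\<integral>\<^sup>+y. ennreal (exp (- quad_form (insert k I) M (x(k:=y)) / 2)) \<partial>lborel)
       = ennreal (sqrt (2 * pi / M$k$k)) * ennreal (exp (- quad_form I (schur_complement k M) x / 2))"
proof -
  let ?S = "schur_complement k M"
  let ?b = "(\<Sum>j\<in>I. M$k$j * x j) / M$k$k"
  have Mkk: "M$k$k > 0" using pos_def_on_schur_complement[OF assms] by simp
  have sym: "\<forall>i\<in>insert k I. \<forall>j\<in>insert k I. M$i$j = M$j$i"
    using assms(3) unfolding pos_def_on_def by blast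
  have "(\<integral>\<^sup>+y. ennreal (exp (- quad_form (insert k I) M (x(k:=y)) / 2)) \<partial>lborel)
      = (\<integral>\<^sup>+y. ennreal (exp (- (M$k$k * (y + ?b)^2) / 2)) * ennreal (exp (- quad_form I ?S x / 2)) \<partial>lborel)"
    using Mkk
    by (intro nn_integral_cong)
      (simp add: quad_form_complete_square[OF assms(1,2) sym] ennreal_mult[symmetric] exp_add[symmetric]
        field_simps)
  also have "\<dots> = (\<integral>\<^sup>+y. ennreal (exp (- (M$k$k * (y + ?b)^2) / 2)) \<partial>lborel) * ennreal (exp (- quad_form I ?S x / 2))"
    by (rule nn_integral_multc) measurable
  finally show ?thesis using nn_integral_exp_neg_square[OF Mkk] by simp
qed

lemma quad_form_measurable: "quad_form J M \<in> borel_measurable (PiM J (\<lambda>_. lborel))"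
  unfolding quad_form_def[abs_def] by measurable

lemma gaussian_integral_PiM:
  fixes M :: "real^'n^'n"
  assumes "finite I" "pos_def_on I M"
  shows "det (restrict_matrix I M) > 0"
    and "(\<integral>\<^sup>+x. ennreal (exp (- quad_form I M x / 2)) \<partial>PiM I (\<lambda>_. lborel))
           = ennreal (sqrt ((2 * pi) ^ card I / det (restrict_matrix I M)))"
proof -
  have "det (restrict_matrix I M) > 0 \<and> (\<integral>\<^sup>+x. ennreal (exp (- quad_form I M x / 2)) \<partial>PiM I (\<lambda>_. lborel))
           = ennreal (sqrt ((2 * pi) ^ card I / det (restrict_matrix I M)))"
    using assms
  proof (induction I arbitrary: M rule: finite_induct)
    case empty
    have "restrict_matrix {} M = mat 1" by (simp add: restrict_matrix_def vec_eq_iff mat_def)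
    then show ?case by (simp add: PiM_empty quad_form_def)
  next
    case (insert k I)
    interpret product_sigma_finite "\<lambda>_::'n. lborel :: real measure" by standard
    let ?S = "schur_complement k M"
    have Mkk: "M$k$k > 0" and pd: "pos_def_on I ?S"
      using pos_def_on_schur_complement[OF insert.hyps insert.prems] by auto
    from insert.IH[OF pd] have IH: "det (restrict_matrix I ?S) > 0"
      "(\<integral>\<^sup>+x. ennreal (exp (- quad_form I ?S x / 2)) \<partial>PiM I (\<lambda>_. lborel))
         = ennreal (sqrt ((2 * pi) ^ card I / det (restrict_matrix I ?S)))" by auto
    have det: "det (restrict_matrix (insert k I) M) = M$k$k * det (restrict_matrix I ?S)"
      using det_restrict_matrix_insert[OF insert.hyps] Mkk by simp
    have meas: "(\<lambda>x. ennreal (exp (- quad_form J M' x / 2))) \<in> borel_measurable (PiM J (\<lambda>_. lborel))"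
      for J and M' :: "real^'n^'n"
      using quad_form_measurable[of J M'] by measurable
    note inner = nn_integral_exp_quad_form_fun_upd[OF insert.hyps insert.prems]
    have "(\<integral>\<^sup>+x. ennreal (exp (- quad_form (insert k I) M x / 2)) \<partial>PiM (insert k I) (\<lambda>_. lborel))
       = (\<integral>\<^sup>+x. (\<integral>\<^sup>+y. ennreal (exp (- quad_form (insert k I) M (x(k:=y)) / 2)) \<partial>lborel) \<partial>PiM I (\<lambda>_. lborel))"
      by (rule product_nn_integral_insert[OF insert.hyps meas])
    also have "\<dots> = ennreal (sqrt (2 * pi / M$k$k))
                    * (\<integral>\<^sup>+x. ennreal (exp (- quad_form I ?S x / 2)) \<partial>PiM I (\<lambda>_. lborel))"
      unfolding inner by (rule nn_integral_cmult[OF meas])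
    also have "\<dots> = ennreal (sqrt ((2 * pi) ^ card (insert k I) / det (restrict_matrix (insert k I) M)))"
      unfolding IH(2) det using insert.hyps Mkk IH(1)
      by (simp add: ennreal_mult[symmetric] real_sqrt_mult[symmetric] field_simps)
    finally show ?case using det Mkk IH(1) by simp
  qed
  then show "det (restrict_matrix I M) > 0"
    and "(\<integral>\<^sup>+x. ennreal (exp (- quad_form I M x / 2)) \<partial>PiM I (\<lambda>_. lborel))
           = ennreal (sqrt ((2 * pi) ^ card I / det (restrict_matrix I M)))"
    by auto
qed

lemma matrix_vector_mult_measurable [measurable]:
  "(\<lambda>v. (P :: real^'n^'m) *v v) \<in> borel_measurable borel"
  by (intro borel_measurable_continuous_onI linear_continuous_on matrix_vector_mul_bounded_linear)

lemma measurable_vec_lambda_PiM: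
  "(\<lambda>x. \<chi> i. x i) \<in> measurable (PiM UNIV (\<lambda>_::'n::finite. lborel)) (borel :: (real^'n) measure)"
proof (subst borel_measurable_euclidean_space, safe)
  fix b :: "real^'n" assume "b \<in> Basis"
  then obtain j where "b = axis j 1" by (auto simp: Basis_vec_def)
  then show "(\<lambda>x. (\<chi> i. x i) \<bullet> b) \<in> borel_measurable (PiM UNIV (\<lambda>_::'n. lborel))"
    by (simp add: inner_axis)
qed

lemma prod_Basis_vec: "(\<Prod>b\<in>(Basis :: (real^'n) set). f b) = (\<Prod>i\<in>UNIV. f (axis i 1))"
proof -
  have "(Basis :: (real^'n) set) = (\<lambda>i. axis i 1) ` UNIV" by (auto simp: Basis_vec_def)
  moreover have "inj (\<lambda>i::'n. axis i (1::real))" by (auto simp: inj_def axis_eq_axis)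
  ultimately show ?thesis using prod.reindex[of "\<lambda>i::'n. axis i (1::real)" UNIV f] by (simp add: o_def)
qed

lemma distr_PiM_vec_lambda:
  "distr (PiM UNIV (\<lambda>_::'n::finite. lborel)) borel (\<lambda>x. \<chi> i. x i) = (lborel :: (real^'n) measure)"
proof (rule lborel_eqI[symmetric])
  fix l u :: "real^'n" assume le: "\<And>b. b \<in> Basis \<Longrightarrow> l \<bullet> b \<le> u \<bullet> b"
  have le': "l$i \<le> u$i" for i using le[of "axis i 1"] by (auto simp: Basis_vec_def inner_axis)
  have pre: "(\<lambda>x. \<chi> i. x i) -` box l u \<inter> space (PiM UNIV (\<lambda>_::'n. lborel)) = PiE UNIV (\<lambda>i. {l$i<..<u$i})"
    by (auto simp: box_def Basis_vec_def inner_axis space_PiM PiE_def extensional_def)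
  interpret finite_product_sigma_finite "\<lambda>_::'n. lborel :: real measure" UNIV
    by standard simp
  have "emeasure (distr (PiM UNIV (\<lambda>_::'n. lborel)) borel (\<lambda>x. \<chi> i. x i)) (box l u)
      = emeasure (PiM UNIV (\<lambda>_::'n. lborel)) (PiE UNIV (\<lambda>i. {l$i<..<u$i}))"
    by (subst emeasure_distr[OF measurable_vec_lambda_PiM]) (simp_all add: pre)
  also have "\<dots> = (\<Prod>i\<in>UNIV. emeasure lborel {l$i<..<u$i})"
    by (rule measure_times) simp
  also have "\<dots> = ennreal (\<Prod>i\<in>UNIV. (u$i - l$i))"
    using le' by (simp add: emeasure_lborel_Ioo prod_ennreal)
  also have "(\<Prod>i\<in>UNIV. (u$i - l$i)) = (\<Prod>b\<in>Basis. (u - l) \<bullet> b)"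
    by (simp add: prod_Basis_vec inner_axis)
  finally show "emeasure (distr (PiM UNIV (\<lambda>_::'n. lborel)) borel (\<lambda>x. \<chi> i. x i)) (box l u)
      = (\<Prod>b\<in>Basis. (u - l) \<bullet> b)" .
qed simp

lemma inner_matrix_vector_eq_quad_form: "(\<chi> i. x i) \<bullet> (P *v (\<chi> i. x i)) = quad_form UNIV P x"
  by (simp add: quad_form_def inner_vec_def matrix_vector_mult_def sum_distrib_left mult_ac)

lemma pos_def_imp_pos_def_on: "pos_def P \<Longrightarrow> pos_def_on UNIV P"
  unfolding pos_def_on_def
proof safe
  assume "pos_def P"
  then have "transpose P = P" by (rule pos_def_symmetric)
  then show "P$i$j = P$j$i" for i j by (metis transpose_def vec_lambda_beta)
next
  fix x :: "'a \<Rightarrow> real" and i assume "pos_def P" "x i \<noteq> 0"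
  then have "(\<chi> i. x i) \<noteq> 0" by (metis vec_lambda_beta zero_index)
  with \<open>pos_def P\<close> have "(\<chi> i. x i) \<bullet> (P *v (\<chi> i. x i)) > 0" by (rule pos_def_inner_pos)
  then show "quad_form UNIV P x > 0" by (simp add: inner_matrix_vector_eq_quad_form)
qed

lemma
  fixes P :: "real^'n^'n"
  assumes "pos_def P"
  shows pos_def_det_pos: "det P > 0"
    and nn_integral_exp_quadratic_form:
      "(\<integral>\<^sup>+v. ennreal (exp (- (v \<bullet> (P *v v)) / 2)) \<partial>lborel) = ennreal (sqrt ((2 * pi) ^ CARD('n) / det P))"
proof -
  have "restrict_matrix UNIV P = P" by (simp add: restrict_matrix_def vec_eq_iff)
  then show "det P > 0"
    using gaussian_integral_PiM(1)[OF _ pos_def_imp_pos_def_on[OF assms]] by simp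
  have "(\<integral>\<^sup>+v. ennreal (exp (- (v \<bullet> (P *v v)) / 2)) \<partial>lborel)
      = (\<integral>\<^sup>+v. ennreal (exp (- (v \<bullet> (P *v v)) / 2)) \<partial>distr (PiM UNIV (\<lambda>_::'n. lborel)) borel (\<lambda>x. \<chi> i. x i))"
    by (simp add: distr_PiM_vec_lambda)
  also have "\<dots> = (\<integral>\<^sup>+x. ennreal (exp (- quad_form UNIV P x / 2)) \<partial>PiM UNIV (\<lambda>_. lborel))"
    by (subst nn_integral_distr[OF measurable_vec_lambda_PiM])
      (measurable, simp add: inner_matrix_vector_eq_quad_form)
  finally show "(\<integral>\<^sup>+v. ennreal (exp (- (v \<bullet> (P *v v)) / 2)) \<partial>lborel) = ennreal (sqrt ((2 * pi) ^ CARD('n) / det P))"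
    using gaussian_integral_PiM(2)[OF _ pos_def_imp_pos_def_on[OF assms]] \<open>restrict_matrix UNIV P = P\<close>
    by simp
qed

lemma nn_integral_lborel_translate:
  fixes f :: "'a::euclidean_space \<Rightarrow> ennreal"
  assumes "f \<in> borel_measurable borel"
  shows "(\<integral>\<^sup>+v. f (v - m) \<partial>lborel) = (\<integral>\<^sup>+v. f v \<partial>lborel)"
proof -
  have "(\<integral>\<^sup>+v. f v \<partial>lborel) = (\<integral>\<^sup>+v. f v \<partial>distr lborel borel ((+) (- m)))"
    by (simp add: lborel_distr_plus)
  also have "\<dots> = (\<integral>\<^sup>+v. f (- m + v) \<partial>lborel)"
    by (rule nn_integral_distr) (simp_all add: assms)
  finally show ?thesis by simp
qed

lemma nn_integral_exp_quadratic_form_shifted: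
  fixes P :: "real^'n^'n"
  assumes "pos_def P"
  shows "(\<integral>\<^sup>+v. ennreal (exp (- ((v - m) \<bullet> (P *v (v - m))) / 2)) \<partial>lborel)
       = ennreal (sqrt ((2 * pi) ^ CARD('n) / det P))"
proof -
  have "(\<lambda>v. ennreal (exp (- (v \<bullet> (P *v v)) / 2))) \<in> borel_measurable borel" by measurable
  from nn_integral_lborel_translate[OF this, of m] show ?thesis
    using nn_integral_exp_quadratic_form[OF assms] by simp
qed

lemma gauss_pdf_measurable [measurable]: "gauss_pdf m S \<in> borel_measurable borel"
  unfolding gauss_pdf_def[abs_def] by measurable

lemma gauss_pdf_pos: "pos_def S \<Longrightarrow> gauss_pdf m S v > 0"
  using pos_def_det_pos[of S] by (simp add: gauss_pdf_def)

lemma ln_gauss_pdf: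
  fixes S :: "real^'n^'n"
  assumes "pos_def S"
  shows "ln (gauss_pdf m S v) = - ((v - m) \<bullet> (matrix_inv S *v (v - m))) / 2 - ln (sqrt ((2 * pi) ^ CARD('n) * det S))"
  using pos_def_det_pos[OF assms] by (simp add: gauss_pdf_def ln_div)

lemma exp_quadratic_eq_gauss_pdf:
  fixes M :: "real^'n^'n"
  assumes M: "pos_def M"
  shows "exp (a - t \<bullet> (M *v t) / 2 + t \<bullet> b)
       = exp (a + b \<bullet> (matrix_inv M *v b) / 2) * sqrt ((2 * pi) ^ CARD('n) / det M)
         * gauss_pdf (matrix_inv M *v b) (matrix_inv M) t"
proof -
  have inv: "invertible M" by (rule pos_def_invertible[OF M])
  have sym: "transpose M = M" by (rule pos_def_symmetric[OF M])
  define \<mu> where "\<mu> = matrix_inv M *v b"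
  have M\<mu>: "M *v \<mu> = b" by (simp add: \<mu>_def matrix_vector_mul_assoc matrix_inv_right[OF inv])
  have "(M *v \<mu>) \<bullet> t = \<mu> \<bullet> (M *v t)" by (rule inner_symmetric_matrix[OF sym])
  then have "(t - \<mu>) \<bullet> (M *v (t - \<mu>)) = t \<bullet> (M *v t) - 2 * (t \<bullet> b) + b \<bullet> (matrix_inv M *v b)"
    by (simp add: matrix_vector_mult_diff_distrib inner_diff_left inner_diff_right M\<mu> inner_commute)
      (simp add: \<mu>_def inner_commute)
  moreover have "det M > 0" by (rule pos_def_det_pos[OF M])
  ultimately show ?thesis
    unfolding gauss_pdf_def matrix_inv_inv[OF inv] det_matrix_inv[OF inv] \<mu>_def[symmetric]
    by (simp add: exp_add[symmetric] exp_diff real_sqrt_divide field_simps)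
qed

lemma gauss_pdf_zero_mean_eq_exp:
  fixes S :: "real^'n^'n"
  assumes "pos_def S"
  shows "gauss_pdf 0 S t = exp (- (t \<bullet> (matrix_inv S *v t)) / 2 - ln (sqrt ((2 * pi) ^ CARD('n) * det S)))"
  using pos_def_det_pos[OF assms] by (simp add: gauss_pdf_def exp_diff)

lemma nn_integral_gauss_pdf:
  fixes S :: "real^'n^'n"
  assumes "pos_def S"
  shows "(\<integral>\<^sup>+v. ennreal (gauss_pdf m S v) \<partial>lborel) = 1"
proof -
  define Z where "Z = sqrt ((2 * pi) ^ CARD('n) * det S)"
  have "Z > 0" using pos_def_det_pos[OF assms] by (simp add: Z_def)
  have "(\<integral>\<^sup>+v. ennreal (gauss_pdf m S v) \<partial>lborel)
      = ennreal (1 / Z) * (\<integral>\<^sup>+v. ennreal (exp (- ((v - m) \<bullet> (matrix_inv S *v (v - m))) / 2)) \<partial>lborel)"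
    using \<open>Z > 0\<close>
    by (subst nn_integral_cmult[symmetric], measurable)
      (simp add: gauss_pdf_def Z_def ennreal_mult[symmetric])
  also have "\<dots> = ennreal (1 / Z) * ennreal (sqrt ((2 * pi) ^ CARD('n) / det (matrix_inv S)))"
    using nn_integral_exp_quadratic_form_shifted[OF pos_def_matrix_inv[OF assms]] by simp
  also have "sqrt ((2 * pi) ^ CARD('n) / det (matrix_inv S)) = Z"
    by (simp add: Z_def det_matrix_inv[OF pos_def_invertible[OF assms]])
  finally show ?thesis using \<open>Z > 0\<close> by (simp add: ennreal_mult[symmetric])
qed

lemma integrable_gauss_pdf: "pos_def S \<Longrightarrow> integrable lborel (gauss_pdf m S)"
  by (rule integrableI_nn_integral_finite[where x=1])
    (auto simp: nn_integral_gauss_pdf less_imp_le[OF gauss_pdf_pos])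

lemma integral_gauss_pdf: "pos_def S \<Longrightarrow> (\<integral>v. gauss_pdf m S v \<partial>lborel) = 1"
  using nn_integral_gauss_pdf[of S m]
  by (subst integral_eq_nn_integral) (auto simp: less_imp_le[OF gauss_pdf_pos])

definition quadratic_growth :: "('a::real_normed_vector \<Rightarrow> real) \<Rightarrow> bool" where
  "quadratic_growth f \<longleftrightarrow> (\<exists>C. \<forall>v. \<bar>f v\<bar> \<le> C * (1 + norm v ^ 2))"

lemma quadratic_growth_const: "quadratic_growth (\<lambda>v. c)"
  unfolding quadratic_growth_def
  by (rule exI[of _ "\<bar>c\<bar>"]) (simp add: mult_le_cancel_left1)

lemma quadratic_growth_add:
  assumes "quadratic_growth f" "quadratic_growth g"
  shows "quadratic_growth (\<lambda>v. f v + g v)"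
proof -
  obtain C D where "\<And>v. \<bar>f v\<bar> \<le> C * (1 + norm v ^ 2)" "\<And>v. \<bar>g v\<bar> \<le> D * (1 + norm v ^ 2)"
    using assms unfolding quadratic_growth_def by blast
  then have "\<bar>f v + g v\<bar> \<le> (C + D) * (1 + norm v ^ 2)" for v
    using abs_triangle_ineq[of "f v" "g v"] by (smt (verit) distrib_right)
  then show ?thesis unfolding quadratic_growth_def by blast
qed

lemma quadratic_growth_cmult:
  assumes "quadratic_growth f"
  shows "quadratic_growth (\<lambda>v. c * f v)"
proof -
  obtain C where "\<And>v. \<bar>f v\<bar> \<le> C * (1 + norm v ^ 2)"
    using assms unfolding quadratic_growth_def by blast
  then have "\<bar>c * f v\<bar> \<le> (\<bar>c\<bar> * C) * (1 + norm v ^ 2)" for v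
    by (simp add: abs_mult mult.assoc mult_left_mono)
  then show ?thesis unfolding quadratic_growth_def by blast
qed

lemma quadratic_growth_diff:
  "quadratic_growth f \<Longrightarrow> quadratic_growth g \<Longrightarrow> quadratic_growth (\<lambda>v. f v - g v)"
  using quadratic_growth_add[of f "\<lambda>v. (-1) * g v"] quadratic_growth_cmult[of g "-1"] by simp

lemma quadratic_growth_inner: "quadratic_growth (\<lambda>v. l \<bullet> v)"
  unfolding quadratic_growth_def
proof (intro exI allI)
  fix v :: 'a
  have "2 * norm v \<le> norm v * norm v + 1"
    using sum_squares_bound[of "norm v" 1] by (simp add: power2_eq_square)
  then have "norm v \<le> 1 + norm v ^ 2"
    using norm_ge_zero[of v] unfolding power2_eq_square by linarith
  then have "norm l * norm v \<le> norm l * (1 + norm v ^ 2)" by (simp add: mult_left_mono)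
  then show "\<bar>l \<bullet> v\<bar> \<le> norm l * (1 + norm v ^ 2)" using Cauchy_Schwarz_ineq2[of l v] by linarith
qed

lemma norm_diff_squared_le: "norm (v - a) ^ 2 \<le> 2 * norm v ^ 2 + 2 * norm a ^ 2"
proof -
  have "norm (v - a) ^ 2 \<le> (norm v + norm a) ^ 2" by (simp add: norm_triangle_ineq4 power_mono)
  also have "\<dots> \<le> 2 * norm v ^ 2 + 2 * norm a ^ 2"
    using sum_squares_bound[of "norm v" "norm a"] by (simp add: power2_eq_square algebra_simps)
  finally show ?thesis .
qed

lemma quadratic_growth_quadratic_form:
  fixes Q :: "real^'n^'n"
  shows "quadratic_growth (\<lambda>v. (v - a) \<bullet> (Q *v (v - a)))"
proof -
  obtain B where B: "B > 0" "\<And>x. norm (Q *v x) \<le> norm x * B"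
    using bounded_linear.pos_bounded[OF matrix_vector_mul_bounded_linear[of Q]] by blast
  have "\<bar>(v - a) \<bullet> (Q *v (v - a))\<bar> \<le> (B * (2 + 2 * norm a ^ 2)) * (1 + norm v ^ 2)" for v
  proof -
    have "\<bar>(v - a) \<bullet> (Q *v (v - a))\<bar> \<le> norm (v - a) * norm (Q *v (v - a))"
      by (rule Cauchy_Schwarz_ineq2)
    also have "\<dots> \<le> norm (v - a) * (norm (v - a) * B)"
      using B(2) by (simp add: mult_left_mono)
    also have "\<dots> \<le> B * (2 * norm v ^ 2 + 2 * norm a ^ 2)"
      using norm_diff_squared_le[of v a] B(1) by (simp add: power2_eq_square mult_ac)
    also have "\<dots> \<le> (B * (2 + 2 * norm a ^ 2)) * (1 + norm v ^ 2)"
      using B(1) by (simp add: algebra_simps)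
    finally show ?thesis .
  qed
  then show ?thesis unfolding quadratic_growth_def by blast
qed

lemma quadratic_times_exp_bounded:
  fixes a :: "'a::real_normed_vector"
  assumes "c > 0"
  shows "(1 + norm v ^ 2) * exp (- (c * norm (v - a) ^ 2)) \<le> 1 + 2 * norm a ^ 2 + 2 / c"
proof -
  define t where "t = norm (v - a) ^ 2"
  have "t \<ge> 0" by (simp add: t_def)
  have e: "0 < exp (- (c * t))" "exp (- (c * t)) \<le> 1" using assms \<open>t \<ge> 0\<close> by auto
  have "c * t \<le> exp (c * t)" using exp_ge_add_one_self[of "c * t"] by linarith
  then have "t * exp (- (c * t)) \<le> 1 / c"
    using assms by (simp add: exp_minus field_simps)
  moreover have "1 + norm v ^ 2 \<le> 1 + 2 * norm a ^ 2 + 2 * t"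
    using norm_diff_squared_le[of "v - a" "- a"] by (simp add: t_def)
  then have "(1 + norm v ^ 2) * exp (- (c * t)) \<le> (1 + 2 * norm a ^ 2 + 2 * t) * exp (- (c * t))"
    using e by (intro mult_right_mono) auto
  then have "(1 + norm v ^ 2) * exp (- (c * t)) \<le> (1 + 2 * norm a ^ 2) * exp (- (c * t)) + 2 * (t * exp (- (c * t)))"
    by (simp add: algebra_simps)
  moreover have "(1 + 2 * norm a ^ 2) * exp (- (c * t)) \<le> 1 + 2 * norm a ^ 2"
    using e by (simp add: mult_left_le)
  ultimately show ?thesis by (simp add: t_def)
qed

lemma integrable_exp_quadratic_form:
  fixes P :: "real^'n^'n"
  assumes "pos_def P"
  shows "integrable lborel (\<lambda>v. exp (- ((v - m) \<bullet> (P *v (v - m))) / 2))"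
  by (rule integrableI_nn_integral_finite[OF _ _ nn_integral_exp_quadratic_form_shifted[OF assms]]) auto

lemma gauss_pdf_mult_bound:
  fixes S :: "real^'n^'n"
  assumes S: "pos_def S" and f: "quadratic_growth f"
  obtains P K where "pos_def P" "\<And>v. \<bar>gauss_pdf m S v * f v\<bar> \<le> K * exp (- ((v - m) \<bullet> (P *v (v - m))) / 2)"
proof -
  obtain d where d: "d > 0" "pos_def (matrix_inv S - d *\<^sub>R mat 1)"
    using pos_def_diff_scaled_identity[OF pos_def_matrix_inv[OF S]] by blast
  define P where "P = matrix_inv S - d *\<^sub>R mat 1"
  define Z where "Z = sqrt ((2 * pi) ^ CARD('n) * det S)"
  have "Z > 0" using pos_def_det_pos[OF S] by (simp add: Z_def)
  obtain C where C: "\<And>v. \<bar>f v\<bar> \<le> C * (1 + norm v ^ 2)"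
    using f unfolding quadratic_growth_def by blast
  have "C \<ge> 0" using C[of 0] abs_ge_zero[of "f 0"] by simp
  define K where "K = C * (1 + 2 * norm m ^ 2 + 4 / d) / Z"
  text \<open>Splitting off a multiple of the identity from the precision leaves a Gaussian factor that
    absorbs the quadratic growth of \<open>f\<close>.\<close>
  have "\<bar>gauss_pdf m S v * f v\<bar> \<le> K * exp (- ((v - m) \<bullet> (P *v (v - m))) / 2)" for v
  proof -
    define E where "E = exp (- ((v - m) \<bullet> (P *v (v - m))) / 2)"
    define e where "e = exp (- (d / 2 * norm (v - m) ^ 2))"
    have "gauss_pdf m S v = E * e / Z"
      unfolding gauss_pdf_def P_def Z_def E_def e_def inner_diff_scaled_identity
      by (simp add: exp_add[symmetric] diff_divide_distrib)
    then have "\<bar>gauss_pdf m S v * f v\<bar> = E / Z * (\<bar>f v\<bar> * e)"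
      using \<open>Z > 0\<close> by (simp add: E_def e_def abs_mult)
    also have "\<dots> \<le> E / Z * (C * ((1 + norm v ^ 2) * e))"
      using C[of v] \<open>Z > 0\<close> by (intro mult_left_mono) (auto simp: E_def e_def mult_right_mono mult.assoc)
    also have "\<dots> \<le> E / Z * (C * (1 + 2 * norm m ^ 2 + 4 / d))"
      using quadratic_times_exp_bounded[of "d / 2" v m] d(1) \<open>C \<ge> 0\<close> \<open>Z > 0\<close>
      by (intro mult_left_mono) (auto simp: E_def e_def mult_left_mono)
    also have "\<dots> = K * E" by (simp add: K_def mult_ac)
    finally show ?thesis unfolding E_def .
  qed
  then show thesis using that d(2) unfolding P_def by blast
qed

lemma integrable_gauss_pdf_mult:
  fixes S :: "real^'n^'n"
  assumes S: "pos_def S" and f: "f \<in> borel_measurable borel" "quadratic_growth f"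
  shows "integrable lborel (\<lambda>v. gauss_pdf m S v * f v)"
proof -
  obtain P K where P: "pos_def P"
    and bound: "\<And>v. \<bar>gauss_pdf m S v * f v\<bar> \<le> K * exp (- ((v - m) \<bullet> (P *v (v - m))) / 2)"
    using gauss_pdf_mult_bound[OF S f(2)] by blast
  show ?thesis
  proof (rule Bochner_Integration.integrable_bound)
    show "integrable lborel (\<lambda>v. K * exp (- ((v - m) \<bullet> (P *v (v - m))) / 2))"
      using integrable_exp_quadratic_form[OF P, of m] by simp
    show "(\<lambda>v. gauss_pdf m S v * f v) \<in> borel_measurable lborel" using f(1) by measurable
    show "AE v in lborel. norm (gauss_pdf m S v * f v) \<le> norm (K * exp (- ((v - m) \<bullet> (P *v (v - m))) / 2))"
      using bound by (intro AE_I2) (metis abs_ge_self order_trans real_norm_def)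
  qed
qed

lemma gauss_pdf_reflect: "gauss_pdf m S (2 *\<^sub>R m - v) = gauss_pdf m S v"
proof -
  have "2 *\<^sub>R m - v - m = - (v - m)" by (simp add: algebra_simps scaleR_2)
  then show ?thesis
    by (simp only: gauss_pdf_def matrix_vector_mult_uminus_right inner_minus_left inner_minus_right minus_minus)
qed

lemma integral_gauss_pdf_inner:
  fixes S :: "real^'n^'n"
  assumes S: "pos_def S"
  shows "(\<integral>v. gauss_pdf m S v * (l \<bullet> v) \<partial>lborel) = l \<bullet> m"
proof -
  define h where "h v = gauss_pdf m S v * (l \<bullet> v)" for v
  have "h \<in> borel_measurable borel" unfolding h_def[abs_def] by measurable
  have "integrable lborel h"
    unfolding h_def by (rule integrable_gauss_pdf_mult[OF S _ quadratic_growth_inner]) measurable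
  have reflect: "distr lborel borel (\<lambda>v. 2 *\<^sub>R m - v) = (lborel :: (real^'n) measure)"
    using lborel_affine[of "-1" "2 *\<^sub>R m"] by (simp add: density_1)
  have "(\<integral>v. h v \<partial>lborel) = (\<integral>v. h (2 *\<^sub>R m - v) \<partial>lborel)"
    by (subst (1) reflect[symmetric], rule integral_distr) (simp_all add: \<open>h \<in> borel_measurable borel\<close>)
  also have "\<dots> = (\<integral>v. 2 * (l \<bullet> m) * gauss_pdf m S v - h v \<partial>lborel)"
    by (rule Bochner_Integration.integral_cong) (simp_all add: h_def gauss_pdf_reflect inner_diff_right algebra_simps)
  also have "\<dots> = 2 * (l \<bullet> m) - (\<integral>v. h v \<partial>lborel)"
    using integrable_gauss_pdf[OF S] \<open>integrable lborel h\<close> by (simp add: integral_gauss_pdf[OF S])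
  finally show ?thesis unfolding h_def by simp
qed

lemma integral_gauss_pdf_affine_plus:
  fixes S :: "real^'n^'n"
  assumes S: "pos_def S" and q: "q \<in> borel_measurable borel" "quadratic_growth q"
  shows "(\<integral>v. gauss_pdf m S v * (a + l \<bullet> v + q v) \<partial>lborel) = a + l \<bullet> m + (\<integral>v. gauss_pdf m S v * q v \<partial>lborel)"
proof -
  have "integrable lborel (\<lambda>v. a * gauss_pdf m S v)" using integrable_gauss_pdf[OF S] by simp
  moreover have "integrable lborel (\<lambda>v. gauss_pdf m S v * (l \<bullet> v))"
    by (rule integrable_gauss_pdf_mult[OF S _ quadratic_growth_inner]) measurable
  moreover have "integrable lborel (\<lambda>v. gauss_pdf m S v * q v)"
    by (rule integrable_gauss_pdf_mult[OF S q])
  ultimately show ?thesis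
    by (simp add: distrib_left integral_gauss_pdf[OF S] integral_gauss_pdf_inner[OF S])
qed

section \<open>Kullback-Leibler divergence between Gaussians\<close>

lemma ln_gauss_pdf_divide:
  assumes "pos_def S1" "pos_def S2"
  shows "ln (gauss_pdf m1 S1 v / gauss_pdf m2 S2 v) = ln (gauss_pdf m1 S1 v) - ln (gauss_pdf m2 S2 v)"
  using assms by (intro ln_divide_pos gauss_pdf_pos)

lemma quadratic_growth_ln_gauss_pdf_divide:
  fixes S1 S2 :: "real^'n^'n"
  assumes "pos_def S1" "pos_def S2"
  shows "quadratic_growth (\<lambda>v. ln (gauss_pdf m1 S1 v / gauss_pdf m2 S2 v))"
proof -
  have "quadratic_growth (\<lambda>v. ln (gauss_pdf m S v))" if "pos_def S" for m and S :: "real^'n^'n"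
    using quadratic_growth_diff[OF quadratic_growth_cmult[OF quadratic_growth_quadratic_form, of "- 1 / 2"]
        quadratic_growth_const]
    by (simp add: ln_gauss_pdf[OF that])
  from quadratic_growth_diff[OF this[OF assms(1)] this[OF assms(2)]] show ?thesis
    by (simp add: ln_gauss_pdf_divide[OF assms])
qed

lemma KL_gauss_pdf_shift_mean:
  fixes S1 S2 :: "real^'n^'n"
  assumes S1: "pos_def S1" and S2: "pos_def S2"
  defines "W \<equiv> matrix_inv S2"
  shows "KL (gauss_pdf m1 S1) (gauss_pdf m2 S2)
       = KL (gauss_pdf m1 S1) (gauss_pdf 0 S2) + m2 \<bullet> (W *v m2) / 2 - m2 \<bullet> (W *v m1)"
proof -
  have W: "transpose W = W" unfolding W_def by (rule pos_def_symmetric[OF pos_def_matrix_inv[OF S2]])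
  define F where "F v = ln (gauss_pdf m1 S1 v / gauss_pdf 0 S2 v)" for v
  have ratio: "ln (gauss_pdf m1 S1 v / gauss_pdf m2 S2 v) = m2 \<bullet> (W *v m2) / 2 + (- (W *v m2)) \<bullet> v + F v" for v
  proof -
    have "(v - m2) \<bullet> (W *v (v - m2)) = v \<bullet> (W *v v) - 2 * ((W *v m2) \<bullet> v) + m2 \<bullet> (W *v m2)"
      using inner_symmetric_matrix[OF W, of m2 v]
      by (simp add: matrix_vector_mult_diff_distrib inner_diff_left inner_diff_right inner_commute[of v "W *v m2"])
    then show ?thesis
      unfolding F_def ln_gauss_pdf_divide[OF S1 S2] ln_gauss_pdf_divide[OF S1 S2, of _ 0]
        ln_gauss_pdf[OF S2] W_def[symmetric]
      by (simp add: field_simps)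
  qed
  have "KL (gauss_pdf m1 S1) (gauss_pdf m2 S2)
      = (\<integral>v. gauss_pdf m1 S1 v * (m2 \<bullet> (W *v m2) / 2 + (- (W *v m2)) \<bullet> v + F v) \<partial>lborel)"
    unfolding KL_def ratio ..
  also have "\<dots> = m2 \<bullet> (W *v m2) / 2 + (- (W *v m2)) \<bullet> m1 + (\<integral>v. gauss_pdf m1 S1 v * F v \<partial>lborel)"
    using quadratic_growth_ln_gauss_pdf_divide[OF S1 S2]
    by (intro integral_gauss_pdf_affine_plus[OF S1]) (simp_all add: F_def[abs_def])
  also have "(\<integral>v. gauss_pdf m1 S1 v * F v \<partial>lborel) = KL (gauss_pdf m1 S1) (gauss_pdf 0 S2)"
    by (simp add: KL_def F_def)
  also have "(- (W *v m2)) \<bullet> m1 = - (m2 \<bullet> (W *v m1))"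
    using inner_symmetric_matrix[OF W, of m2 m1] by simp
  finally show ?thesis by simp
qed

lemma integral_gauss_pdf_KL_affine_mean:
  fixes Sb :: "real^'b^'b" and S SY :: "real^'y^'y" and P :: "real^'b^'y"
  assumes Sb: "pos_def Sb" and S: "pos_def S" and SY: "pos_def SY"
  defines "W \<equiv> matrix_inv SY"
  shows "(\<integral>t. gauss_pdf mb Sb t * KL (gauss_pdf my S) (gauss_pdf (u + P *v t) SY) \<partial>lborel)
     = KL (gauss_pdf my S) (gauss_pdf 0 SY) + u \<bullet> (W *v u) / 2 - u \<bullet> (W *v my)
       + (P *v mb) \<bullet> (W *v (u - my))
       + (\<integral>t. gauss_pdf mb Sb t * ((P *v t) \<bullet> (W *v (P *v t)) / 2) \<partial>lborel)"
proof -
  have W: "transpose W = W" unfolding W_def by (rule pos_def_symmetric[OF pos_def_matrix_inv[OF SY]])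
  define a where "a = KL (gauss_pdf my S) (gauss_pdf 0 SY) + u \<bullet> (W *v u) / 2 - u \<bullet> (W *v my)"
  define l where "l = transpose P *v (W *v (u - my))"
  define q where "q t = (P *v t) \<bullet> (W *v (P *v t)) / 2" for t
  have l: "l \<bullet> t = (P *v t) \<bullet> (W *v (u - my))" for t
    unfolding l_def using inner_matrix_transpose[of P t "W *v (u - my)"] by (simp add: inner_commute)
  have KL: "KL (gauss_pdf my S) (gauss_pdf (u + P *v t) SY) = a + l \<bullet> t + q t" for t
  proof -
    have "(P *v t) \<bullet> (W *v u) = u \<bullet> (W *v (P *v t))"
      using inner_symmetric_matrix[OF W, of u "P *v t"] by (simp add: inner_commute)
    then show ?thesis
      unfolding KL_gauss_pdf_shift_mean[OF S SY, of my "u + P *v t", folded W_def] a_def l q_def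
      by (simp add: matrix_vector_right_distrib matrix_vector_mult_diff_distrib inner_add_left inner_add_right
          inner_diff_right field_simps)
  qed
  have "quadratic_growth q"
  proof -
    have "q = (\<lambda>t. 1 / 2 * ((t - 0) \<bullet> ((transpose P ** W ** P) *v (t - 0))))"
      by (simp add: fun_eq_iff q_def inner_transpose_mult3)
    then show ?thesis
      by (simp only: quadratic_growth_cmult quadratic_growth_quadratic_form)
  qed
  have "(\<integral>t. gauss_pdf mb Sb t * KL (gauss_pdf my S) (gauss_pdf (u + P *v t) SY) \<partial>lborel)
      = a + l \<bullet> mb + (\<integral>t. gauss_pdf mb Sb t * q t \<partial>lborel)"
    unfolding KL using \<open>quadratic_growth q\<close>
    by (intro integral_gauss_pdf_affine_plus[OF Sb]) (simp_all add: q_def[abs_def])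
  then show ?thesis by (simp add: a_def l q_def)
qed

section \<open>The self-consistent update\<close>

text \<open>In the paper's notation \<open>M\<close> is \<open>\<Sigma>\<^sub>\<zeta>\<^sub>1\<inverse>\<close> after the update and \<open>N\<close> is \<open>\<Sigma>\<^sub>\<zeta>\<^sub>1\<inverse> A\<close> after
  the update. The conditional \<open>p(T\<^sub>2 | x)\<close> enters only as \<open>N(B\<^sub>n x, S\<^sub>z\<^sub>n)\<close>, so the same lemma
  yields the \<open>T\<^sub>2\<close>-update, which uses the already updated \<open>T\<^sub>1\<close>.\<close>

lemma self_consistent_exponent_quadratic:
  fixes ST :: "real^'a^'a" and S21 :: "real^'b^'b" and Xi :: "real^'a^'b" and Bn :: "real^'x^'b"
    and Szn :: "real^'b^'b" and Th :: "real^'x^'y" and SYgX SY :: "real^'y^'y"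
    and Psi :: "real^'a^'y" and Psi' :: "real^'b^'y" and bet gam :: real
  assumes ST: "pos_def ST" and S21: "pos_def S21" and Szn: "pos_def Szn" and SYgX: "pos_def SYgX"
    and SY: "pos_def SY"
  defines "M \<equiv> matrix_inv ST - (gam / bet) *\<^sub>R (transpose Xi ** matrix_inv S21 ** Xi)
                + (1 / bet) *\<^sub>R (transpose Psi ** matrix_inv SY ** Psi)"
    and "N \<equiv> - (gam / bet) *\<^sub>R (transpose Xi ** matrix_inv S21 ** Bn)
                + (1 / bet) *\<^sub>R (transpose Psi ** matrix_inv SY ** (Th - Psi' ** Bn))"
  shows "\<exists>h. \<forall>x t. gauss_pdf 0 ST t * exp (gam / bet * KL (gauss_pdf (Bn *v x) Szn) (gauss_pdf (Xi *v t) S21)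
          - 1 / bet * (\<integral>t2. gauss_pdf (Bn *v x) Szn t2
                          * KL (gauss_pdf (Th *v x) SYgX) (gauss_pdf (Psi *v t + Psi' *v t2) SY) \<partial>lborel))
                 = exp (h x - t \<bullet> (M *v t) / 2 + t \<bullet> (N *v x))"
proof -
  define W1 where "W1 = matrix_inv ST"
  define W21 where "W21 = matrix_inv S21"
  define WY where "WY = matrix_inv SY"
  have WY: "transpose WY = WY" unfolding WY_def by (rule pos_def_symmetric[OF pos_def_matrix_inv[OF SY]])
  define E where "E x = (\<integral>t2. gauss_pdf (Bn *v x) Szn t2 * ((Psi' *v t2) \<bullet> (WY *v (Psi' *v t2)) / 2) \<partial>lborel)" for x
  define h where "h x = - ln (sqrt ((2 * pi) ^ CARD('a) * det ST))
      + gam / bet * KL (gauss_pdf (Bn *v x) Szn) (gauss_pdf 0 S21)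
      - 1 / bet * (KL (gauss_pdf (Th *v x) SYgX) (gauss_pdf 0 SY) - (Psi' *v (Bn *v x)) \<bullet> (WY *v (Th *v x)) + E x)"
    for x
  have M_form: "t \<bullet> (M *v t) = t \<bullet> (W1 *v t) - gam / bet * ((Xi *v t) \<bullet> (W21 *v (Xi *v t)))
       + 1 / bet * ((Psi *v t) \<bullet> (WY *v (Psi *v t)))" for t
    unfolding M_def W1_def W21_def WY_def
    by (simp only: matrix_vector_mult_add_rdistrib matrix_vector_mult_diff_rdistrib inner_add_right
        inner_diff_right scaleR_matrix_vector_assoc[symmetric] inner_scaleR_right inner_transpose_mult3)
  have N_form: "t \<bullet> (N *v x) = - (gam / bet) * ((Xi *v t) \<bullet> (W21 *v (Bn *v x)))
       + 1 / bet * ((Psi *v t) \<bullet> (WY *v (Th *v x)) - (Psi *v t) \<bullet> (WY *v (Psi' *v (Bn *v x))))" for t x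
  proof -
    have "(Th - Psi' ** Bn) *v x = Th *v x - Psi' *v (Bn *v x)"
      by (simp only: matrix_vector_mult_diff_rdistrib matrix_vector_mul_assoc)
    then show ?thesis
      unfolding N_def W21_def WY_def
      by (simp only: matrix_vector_mult_add_rdistrib inner_add_right scaleR_matrix_vector_assoc[symmetric]
          inner_scaleR_right inner_transpose_mult3 matrix_vector_mult_diff_distrib inner_diff_right)
  qed
  have "gauss_pdf 0 ST t * exp (gam / bet * KL (gauss_pdf (Bn *v x) Szn) (gauss_pdf (Xi *v t) S21)
          - 1 / bet * (\<integral>t2. gauss_pdf (Bn *v x) Szn t2
                          * KL (gauss_pdf (Th *v x) SYgX) (gauss_pdf (Psi *v t + Psi' *v t2) SY) \<partial>lborel))
      = exp (h x - t \<bullet> (M *v t) / 2 + t \<bullet> (N *v x))" for x t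
  proof -
    have sym: "(Psi' *v (Bn *v x)) \<bullet> (WY *v (Psi *v t)) = (Psi *v t) \<bullet> (WY *v (Psi' *v (Bn *v x)))"
      using inner_symmetric_matrix[OF WY, of "Psi' *v (Bn *v x)" "Psi *v t"] by (simp add: inner_commute)
    have KL1: "KL (gauss_pdf (Bn *v x) Szn) (gauss_pdf (Xi *v t) S21)
        = KL (gauss_pdf (Bn *v x) Szn) (gauss_pdf 0 S21)
          + (Xi *v t) \<bullet> (W21 *v (Xi *v t)) / 2 - (Xi *v t) \<bullet> (W21 *v (Bn *v x))"
      unfolding W21_def by (rule KL_gauss_pdf_shift_mean[OF Szn S21])
    have KL2: "(\<integral>t2. gauss_pdf (Bn *v x) Szn t2
                  * KL (gauss_pdf (Th *v x) SYgX) (gauss_pdf (Psi *v t + Psi' *v t2) SY) \<partial>lborel)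
        = KL (gauss_pdf (Th *v x) SYgX) (gauss_pdf 0 SY) + (Psi *v t) \<bullet> (WY *v (Psi *v t)) / 2
          - (Psi *v t) \<bullet> (WY *v (Th *v x)) + (Psi *v t) \<bullet> (WY *v (Psi' *v (Bn *v x)))
          - (Psi' *v (Bn *v x)) \<bullet> (WY *v (Th *v x)) + E x"
      unfolding integral_gauss_pdf_KL_affine_mean[OF Szn SYgX SY] E_def WY_def[symmetric]
      using sym by (simp add: matrix_vector_mult_diff_distrib inner_diff_right)
    show "gauss_pdf 0 ST t * exp (gam / bet * KL (gauss_pdf (Bn *v x) Szn) (gauss_pdf (Xi *v t) S21)
        - 1 / bet * (\<integral>t2. gauss_pdf (Bn *v x) Szn t2
                        * KL (gauss_pdf (Th *v x) SYgX) (gauss_pdf (Psi *v t + Psi' *v t2) SY) \<partial>lborel))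
      = exp (h x - t \<bullet> (M *v t) / 2 + t \<bullet> (N *v x))"
      unfolding gauss_pdf_zero_mean_eq_exp[OF ST] exp_add[symmetric] KL1 KL2 M_form N_form h_def
        W1_def[symmetric]
      by (simp add: algebra_simps add_divide_distrib diff_divide_distrib)
  qed
  then show ?thesis by blast
qed

lemma self_consistent_update_gaussian:
  fixes ST :: "real^'a^'a" and S21 :: "real^'b^'b" and Xi :: "real^'a^'b" and Bn :: "real^'x^'b"
    and Szn :: "real^'b^'b" and Th :: "real^'x^'y" and SYgX SY :: "real^'y^'y"
    and Psi :: "real^'a^'y" and Psi' :: "real^'b^'y" and bet gam :: real
  assumes ST: "pos_def ST" and S21: "pos_def S21" and Szn: "pos_def Szn" and SYgX: "pos_def SYgX"
    and SY: "pos_def SY"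
  defines "M \<equiv> matrix_inv ST - (gam / bet) *\<^sub>R (transpose Xi ** matrix_inv S21 ** Xi)
                + (1 / bet) *\<^sub>R (transpose Psi ** matrix_inv SY ** Psi)"
    and "N \<equiv> - (gam / bet) *\<^sub>R (transpose Xi ** matrix_inv S21 ** Bn)
                + (1 / bet) *\<^sub>R (transpose Psi ** matrix_inv SY ** (Th - Psi' ** Bn))"
  assumes M: "pos_def M"
  shows "\<exists>c. \<forall>x. c x > 0 \<and> (\<forall>t.
     gauss_pdf 0 ST t * exp (gam / bet * KL (gauss_pdf (Bn *v x) Szn) (gauss_pdf (Xi *v t) S21)
           - 1 / bet * (\<integral>t2. gauss_pdf (Bn *v x) Szn t2
                           * KL (gauss_pdf (Th *v x) SYgX) (gauss_pdf (Psi *v t + Psi' *v t2) SY) \<partial>lborel))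
     = c x * gauss_pdf ((matrix_inv M ** N) *v x) (matrix_inv M) t)"
proof -
  obtain h where h: "\<And>x t. gauss_pdf 0 ST t * exp (gam / bet * KL (gauss_pdf (Bn *v x) Szn) (gauss_pdf (Xi *v t) S21)
            - 1 / bet * (\<integral>t2. gauss_pdf (Bn *v x) Szn t2
                            * KL (gauss_pdf (Th *v x) SYgX) (gauss_pdf (Psi *v t + Psi' *v t2) SY) \<partial>lborel))
      = exp (h x - t \<bullet> (M *v t) / 2 + t \<bullet> (N *v x))"
    using self_consistent_exponent_quadratic[OF ST S21 Szn SYgX SY, where Xi=Xi and Bn=Bn and Th=Th and Psi=Psi
        and Psi'=Psi' and bet=bet and gam=gam, folded M_def N_def]
    by blast
  define c where "c x = exp (h x + (N *v x) \<bullet> (matrix_inv M *v (N *v x)) / 2) * sqrt ((2 * pi) ^ CARD('a) / det M)"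
    for x
  have "c x > 0" for x using pos_def_det_pos[OF M] by (simp add: c_def)
  moreover have "exp (h x - t \<bullet> (M *v t) / 2 + t \<bullet> (N *v x))
      = c x * gauss_pdf ((matrix_inv M ** N) *v x) (matrix_inv M) t" for x t
    by (simp add: exp_quadratic_eq_gauss_pdf[OF M] c_def matrix_vector_mul_assoc)
  ultimately show ?thesis unfolding h by blast
qed

section \<open>Covariances of the Gaussian bottleneck model\<close>

lemma pos_def_S_T: "pos_def SX \<Longrightarrow> pos_def Sz \<Longrightarrow> pos_def (S_T SX A Sz)"
  unfolding S_T_def by (intro pos_semidef_add_pos_def pos_semidef_congruence pos_def_imp_pos_semidef)

lemma pos_def_precision_sum:
  assumes "pos_def S" "pos_def Sz"
  shows "pos_def (S + transpose A ** matrix_inv Sz ** A)"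
  using pos_def_add_congruence[OF assms(1) pos_def_matrix_inv[OF assms(2)], of "transpose A"] by simp

lemma pos_def_S_XgT: "pos_def SX \<Longrightarrow> pos_def Sz \<Longrightarrow> pos_def (S_XgT SX A Sz)"
  unfolding S_XgT_def by (intro pos_def_matrix_inv pos_def_precision_sum)

lemma pos_def_S_T2gT1:
  "pos_def SX \<Longrightarrow> pos_def Sz1 \<Longrightarrow> pos_def Sz2 \<Longrightarrow> pos_def (S_T2gT1 SX A Sz1 B Sz2)"
  unfolding S_T2gT1_def
  by (intro pos_semidef_add_pos_def pos_semidef_congruence pos_def_imp_pos_semidef pos_def_S_XgT)

lemma S_XgT_Woodbury:
  fixes SX :: "real^'x^'x" and A :: "real^'x^'a" and Sz :: "real^'a^'a"
  assumes SX: "pos_def SX" and Sz: "pos_def Sz"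
  shows "S_XgT SX A Sz = SX - SX ** transpose A ** matrix_inv (S_T SX A Sz) ** A ** SX"
proof -
  define T where "T = S_T SX A Sz"
  define R where "R = SX - SX ** transpose A ** matrix_inv T ** A ** SX"
  let ?Z = "matrix_inv Sz"
  have T: "T ** matrix_inv T = mat 1" unfolding T_def by (rule pos_def_matrix_inv_right[OF pos_def_S_T[OF SX Sz]])
  have "transpose A ** ?Z ** T = transpose A ** ?Z ** A ** SX ** transpose A + transpose A"
    unfolding T_def S_T_def
    by (simp add: matrix_mult_normalize matrix_mul_right_inverse_cancel[OF pos_def_matrix_inv_left[OF Sz]])
  then have push: "transpose A + transpose A ** ?Z ** A ** SX ** transpose A = transpose A ** ?Z ** T"
    by simp
  have "(matrix_inv SX + transpose A ** ?Z ** A) ** R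
      = mat 1 + transpose A ** ?Z ** A ** SX
        - (transpose A + transpose A ** ?Z ** A ** SX ** transpose A) ** matrix_inv T ** A ** SX"
    unfolding R_def
    by (simp add: matrix_mult_normalize pos_def_matrix_inv_left[OF SX] algebra_simps)
  also have "\<dots> = mat 1"
    unfolding push by (simp add: matrix_mul_right_inverse_cancel[OF T])
  finally have "matrix_inv (matrix_inv SX + transpose A ** ?Z ** A) = R" by (rule matrix_inv_unique)
  then show ?thesis unfolding S_XgT_def R_def T_def .
qed

lemma S_T2gT1_Schur_complement:
  fixes SX :: "real^'x^'x" and A :: "real^'x^'a" and B :: "real^'x^'b"
  assumes SX: "pos_def SX" and Sz2: "pos_def Sz2"
  shows "S_T2gT1 SX B Sz2 A Sz1
       = S_T SX A Sz1 - transpose (B ** SX ** transpose A) ** matrix_inv (S_T SX B Sz2) ** (B ** SX ** transpose A)"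
  unfolding S_T2gT1_def S_XgT_Woodbury[OF SX Sz2] S_T_def
    transpose_congruence_symmetric[OF pos_def_symmetric[OF SX]]
  by (simp add: matrix_mult_normalize algebra_simps)

lemma S_T2gT1_intertwining:
  fixes SX :: "real^'x^'x" and A :: "real^'x^'a" and B :: "real^'x^'b"
  assumes SX: "pos_def SX" and Sz1: "pos_def Sz1" and Sz2: "pos_def Sz2"
  defines "C \<equiv> B ** SX ** transpose A"
  shows "C ** matrix_inv (S_T SX A Sz1) ** S_T2gT1 SX B Sz2 A Sz1
       = S_T2gT1 SX A Sz1 B Sz2 ** matrix_inv (S_T SX B Sz2) ** C"
proof -
  define T1 where "T1 = S_T SX A Sz1"
  define T2 where "T2 = S_T SX B Sz2"
  have T1: "matrix_inv T1 ** T1 = mat 1" unfolding T1_def by (intro pos_def_matrix_inv_left pos_def_S_T SX Sz1)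
  have T2: "T2 ** matrix_inv T2 = mat 1" unfolding T2_def by (intro pos_def_matrix_inv_right pos_def_S_T SX Sz2)
  have tC: "transpose C = A ** SX ** transpose B"
    unfolding C_def by (rule transpose_congruence_symmetric[OF pos_def_symmetric[OF SX]])
  have S12: "S_T2gT1 SX B Sz2 A Sz1 = T1 - transpose C ** matrix_inv T2 ** C"
    unfolding T1_def T2_def C_def by (rule S_T2gT1_Schur_complement[OF SX Sz2])
  have S21: "S_T2gT1 SX A Sz1 B Sz2 = T2 - C ** matrix_inv T1 ** transpose C"
    using S_T2gT1_Schur_complement[OF SX Sz1, of A B Sz2] tC
      transpose_congruence_symmetric[OF pos_def_symmetric[OF SX], of A B]
    unfolding T1_def T2_def C_def by simp
  text \<open>Both sides equal \<open>C - C T\<^sub>1\<inverse> C\<^sup>T T\<^sub>2\<inverse> C\<close>.\<close>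
  show ?thesis
    unfolding S12 S21 T1_def[symmetric] T2_def[symmetric]
    by (simp add: matrix_mult_normalize matrix_mul_right_inverse_cancel[OF T1] T2)
qed

text \<open>The left-hand side is the factor of \<open>\<Psi>\<^sub>1\<close> after \<open>\<Theta>\<close>, the gain of \<open>T\<^sub>1\<close> in
  \<open>E[X | T\<^sub>1, T\<^sub>2]\<close>; the right-hand side is the same gain in information form.\<close>

lemma posterior_gain_eq:
  fixes SX :: "real^'x^'x" and A :: "real^'x^'a" and B :: "real^'x^'b"
  assumes SX: "pos_def SX" and Sz1: "pos_def Sz1" and Sz2: "pos_def Sz2"
  shows "SX ** transpose A ** matrix_inv (S_T2gT1 SX B Sz2 A Sz1)
      - SX ** transpose B ** matrix_inv (S_T2gT1 SX A Sz1 B Sz2) ** B ** SX ** transpose A ** matrix_inv (S_T SX A Sz1)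
     = matrix_inv (matrix_inv SX + transpose B ** matrix_inv Sz2 ** B + transpose A ** matrix_inv Sz1 ** A)
        ** transpose A ** matrix_inv Sz1"
proof -
  define C where "C = B ** SX ** transpose A"
  define T1 where "T1 = S_T SX A Sz1"
  define T2 where "T2 = S_T SX B Sz2"
  define S12 where "S12 = S_T2gT1 SX B Sz2 A Sz1"
  define S21 where "S21 = S_T2gT1 SX A Sz1 B Sz2"
  define Pb where "Pb = matrix_inv SX + transpose B ** matrix_inv Sz2 ** B"
  define P where "P = Pb + transpose A ** matrix_inv Sz1 ** A"
  define K where "K = SX ** transpose A ** matrix_inv S12 - SX ** transpose B ** matrix_inv S21 ** C ** matrix_inv T1"
  have S12: "pos_def S12" unfolding S12_def by (rule pos_def_S_T2gT1[OF SX Sz2 Sz1])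
  have S21: "matrix_inv S21 ** S21 = mat 1" unfolding S21_def by (intro pos_def_matrix_inv_left pos_def_S_T2gT1 SX Sz1 Sz2)
  have Pb: "pos_def Pb" unfolding Pb_def by (rule pos_def_precision_sum[OF pos_def_matrix_inv[OF SX] Sz2])
  have P: "pos_def P" unfolding P_def by (rule pos_def_precision_sum[OF Pb Sz1])
  have "C ** matrix_inv T1 ** S12 = S21 ** matrix_inv T2 ** C"
    unfolding C_def T1_def T2_def S12_def S21_def by (rule S_T2gT1_intertwining[OF SX Sz1 Sz2])
  then have intertwine: "matrix_inv S21 ** C ** matrix_inv T1 ** S12 = matrix_inv T2 ** C"
    by (simp add: matrix_mul_assoc[symmetric] matrix_mul_assoc[of "matrix_inv S21" S21] S21)
  have KS12: "K ** S12 = matrix_inv Pb ** transpose A"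
  proof -
    have "K ** S12 = SX ** transpose A - SX ** transpose B ** (matrix_inv S21 ** C ** matrix_inv T1 ** S12)"
      unfolding K_def
      by (simp add: matrix_mult_normalize matrix_mul_right_inverse_cancel[OF pos_def_matrix_inv_left[OF S12]])
    also have "\<dots> = SX ** transpose A - SX ** transpose B ** matrix_inv T2 ** B ** SX ** transpose A"
      unfolding intertwine by (simp add: C_def matrix_mul_assoc)
    also have "\<dots> = matrix_inv Pb ** transpose A"
      using S_XgT_Woodbury[OF SX Sz2, of B] unfolding S_XgT_def Pb_def[symmetric] T2_def[symmetric]
      by (simp add: matrix_mult_normalize)
    finally show ?thesis .
  qed
  have PPb: "P ** matrix_inv Pb ** transpose A = transpose A ** matrix_inv Sz1 ** S12"
  proof -
    have "S12 = A ** matrix_inv Pb ** transpose A + Sz1"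
      unfolding S12_def S_T2gT1_def S_XgT_def Pb_def ..
    then show ?thesis
      unfolding P_def
      by (simp add: matrix_mult_normalize pos_def_matrix_inv_right[OF Pb]
          matrix_mul_right_inverse_cancel[OF pos_def_matrix_inv_right[OF Pb]]
          matrix_mul_right_inverse_cancel[OF pos_def_matrix_inv_left[OF Sz1]] algebra_simps)
  qed
  have "P ** K = transpose A ** matrix_inv Sz1"
  proof -
    have "P ** K = P ** (K ** S12) ** matrix_inv S12"
      by (simp add: matrix_mul_assoc matrix_mul_right_inverse_cancel[OF pos_def_matrix_inv_right[OF S12]])
    also have "\<dots> = transpose A ** matrix_inv Sz1 ** S12 ** matrix_inv S12"
      unfolding KS12 by (simp only: PPb matrix_mul_assoc)
    also have "\<dots> = transpose A ** matrix_inv Sz1"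
      by (simp add: matrix_mul_right_inverse_cancel[OF pos_def_matrix_inv_right[OF S12]])
    finally show ?thesis .
  qed
  then have "K = matrix_inv P ** transpose A ** matrix_inv Sz1"
    by (metis pos_def_matrix_inv_left[OF P] matrix_mul_assoc matrix_mul_lid)
  then show ?thesis unfolding K_def C_def P_def Pb_def S12_def S21_def T1_def by (simp add: matrix_mul_assoc)
qed

lemma S_XgT12_eq_matrix_inv:
  fixes SX :: "real^'x^'x" and A :: "real^'x^'a" and B :: "real^'x^'b"
  assumes SX: "pos_def SX" and Sz1: "pos_def Sz1" and Sz2: "pos_def Sz2"
  shows "S_XgT12 SX A Sz1 B Sz2
       = matrix_inv (matrix_inv SX + transpose A ** matrix_inv Sz1 ** A + transpose B ** matrix_inv Sz2 ** B)"
proof -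
  define P where "P = matrix_inv SX + transpose A ** matrix_inv Sz1 ** A + transpose B ** matrix_inv Sz2 ** B"
  have P_swap: "matrix_inv SX + transpose B ** matrix_inv Sz2 ** B + transpose A ** matrix_inv Sz1 ** A = P"
    unfolding P_def by (simp add: algebra_simps)
  have "pos_def P"
    unfolding P_def by (intro pos_def_precision_sum pos_def_matrix_inv SX Sz1 Sz2)
  define K1 where "K1 = SX ** transpose A ** matrix_inv (S_T2gT1 SX B Sz2 A Sz1)
      - SX ** transpose B ** matrix_inv (S_T2gT1 SX A Sz1 B Sz2) ** B ** SX ** transpose A ** matrix_inv (S_T SX A Sz1)"
  define K2 where "K2 = SX ** transpose B ** matrix_inv (S_T2gT1 SX A Sz1 B Sz2)
      - SX ** transpose A ** matrix_inv (S_T2gT1 SX B Sz2 A Sz1) ** A ** SX ** transpose B ** matrix_inv (S_T SX B Sz2)"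
  have K1: "K1 = matrix_inv P ** transpose A ** matrix_inv Sz1"
    unfolding K1_def posterior_gain_eq[OF SX Sz1 Sz2] P_swap ..
  have K2: "K2 = matrix_inv P ** transpose B ** matrix_inv Sz2"
    unfolding K2_def posterior_gain_eq[OF SX Sz2 Sz1] P_def ..
  have "matrix_inv P ** P ** SX - K1 ** A ** SX - K2 ** B ** SX = matrix_inv P"
    unfolding K1 K2 P_def
    by (simp add: matrix_mult_normalize matrix_mul_right_inverse_cancel[OF pos_def_matrix_inv_left[OF SX]])
  then have "SX - K1 ** A ** SX - K2 ** B ** SX = matrix_inv P"
    using pos_def_matrix_inv_left[OF \<open>pos_def P\<close>] by simp
  moreover have "S_XgT12 SX A Sz1 B Sz2 = SX - K1 ** A ** SX - K2 ** B ** SX"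
    unfolding S_XgT12_def K1_def K2_def by (simp add: matrix_mult_normalize algebra_simps)
  ultimately show ?thesis unfolding P_def by simp
qed

lemma pos_def_S_YgT12:
  assumes SX: "pos_def SX" and Sz1: "pos_def Sz1" and Sz2: "pos_def Sz2" and SY: "pos_def (S_YgX SX SY SYX)"
  shows "pos_def (S_YgT12 SX SY SYX A Sz1 B Sz2)"
proof -
  have "pos_def (matrix_inv SX + transpose A ** matrix_inv Sz1 ** A + transpose B ** matrix_inv Sz2 ** B)"
    by (intro pos_def_precision_sum pos_def_matrix_inv SX Sz1 Sz2)
  then show ?thesis
    unfolding S_YgT12_def S_XgT12_eq_matrix_inv[OF SX Sz1 Sz2]
    by (rule pos_semidef_add_pos_def[OF pos_semidef_congruence[OF pos_def_imp_pos_semidef[OF pos_def_matrix_inv]] SY])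
qed

lemma S_YgT12_swap: "S_YgT12 SX SY SYX B Sz2 A Sz1 = S_YgT12 SX SY SYX A Sz1 B Sz2"
proof -
  have "S_XgT12 SX B Sz2 A Sz1 = S_XgT12 SX A Sz1 B Sz2"
    unfolding S_XgT12_def by (simp add: algebra_simps)
  then show ?thesis unfolding S_YgT12_def by simp
qed

theorem theorem2:
  fixes SX :: "real^'x^'x" and SY :: "real^'y^'y" and SYX :: "real^'x^'y"
    and A :: "real^'x^'a" and Sz1 :: "real^'a^'a"
    and B :: "real^'x^'b" and Sz2 :: "real^'b^'b"
    and bet lam gam :: real
  assumes SX_pd: "pos_def SX"
    and SYgX_pd: "pos_def (S_YgX SX SY SYX)"
    and Sz1_pd: "pos_def Sz1" and Sz2_pd: "pos_def Sz2"
    and bet: "bet > 0" and lam: "lam > 0" and gam: "gam \<ge> 0"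
    and P1_pd: "pos_def (matrix_inv (S_T SX A Sz1)
        - (gam / bet) *\<^sub>R (transpose (Xi SX A Sz1 B) ** matrix_inv (S_T2gT1 SX A Sz1 B Sz2) ** Xi SX A Sz1 B)
        + (1 / bet) *\<^sub>R (transpose (Psi SX SYX A Sz1 B Sz2) ** matrix_inv (S_YgT12 SX SY SYX A Sz1 B Sz2)
                          ** Psi SX SYX A Sz1 B Sz2))"
    and P2_pd: "pos_def (matrix_inv (S_T SX B Sz2)
        - (gam / lam) *\<^sub>R (transpose (Xi SX B Sz2 A) ** matrix_inv (S_T2gT1 SX B Sz2 A Sz1) ** Xi SX B Sz2 A)
        + (1 / lam) *\<^sub>R (transpose (Psi SX SYX B Sz2 A Sz1) ** matrix_inv (S_YgT12 SX SY SYX A Sz1 B Sz2)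
                          ** Psi SX SYX B Sz2 A Sz1))"
  shows
    "let Th = Theta SX SYX;
         Xi1 = Xi SX A Sz1 B; Xi2 = Xi SX B Sz2 A;
         Psi1 = Psi SX SYX A Sz1 B Sz2; Psi2 = Psi SX SYX B Sz2 A Sz1;
         iST1 = matrix_inv (S_T SX A Sz1); iST2 = matrix_inv (S_T SX B Sz2);
         iST2gT1 = matrix_inv (S_T2gT1 SX A Sz1 B Sz2);
         iST1gT2 = matrix_inv (S_T2gT1 SX B Sz2 A Sz1);
         iSY = matrix_inv (S_YgT12 SX SY SYX A Sz1 B Sz2);
         iSz1' = iST1 - (gam / bet) *\<^sub>R (transpose Xi1 ** iST2gT1 ** Xi1)
                      + (1 / bet) *\<^sub>R (transpose Psi1 ** iSY ** Psi1);
         Sz1' = matrix_inv iSz1';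
         A' = Sz1' ** (- (gam / bet) *\<^sub>R (transpose Xi1 ** iST2gT1 ** B)
                       + (1 / bet) *\<^sub>R (transpose Psi1 ** iSY ** (Th - Psi2 ** B)));
         iSz2' = iST2 - (gam / lam) *\<^sub>R (transpose Xi2 ** iST1gT2 ** Xi2)
                      + (1 / lam) *\<^sub>R (transpose Psi2 ** iSY ** Psi2);
         Sz2' = matrix_inv iSz2';
         B' = Sz2' ** (- (gam / lam) *\<^sub>R (transpose Xi2 ** iST1gT2 ** A')
                       + (1 / lam) *\<^sub>R (transpose Psi2 ** iSY ** (Th - Psi1 ** A')))
     in (\<exists>c :: real^'x \<Rightarrow> real. \<forall>x. c x > 0 \<and>
            (\<forall>t1. sc_rhs SX SY SYX A Sz1 B Sz2 B Sz2 bet gam x t1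
                   = c x * gauss_pdf (A' *v x) Sz1' t1))
      \<and> (\<exists>c :: real^'x \<Rightarrow> real. \<forall>x. c x > 0 \<and>
            (\<forall>t2. sc_rhs SX SY SYX B Sz2 A Sz1 A' Sz1' lam gam x t2
                   = c x * gauss_pdf (B' *v x) Sz2' t2))"
proof -
  have ST1: "pos_def (S_T SX A Sz1)" and ST2: "pos_def (S_T SX B Sz2)"
    using pos_def_S_T SX_pd Sz1_pd Sz2_pd by blast+
  have S21: "pos_def (S_T2gT1 SX A Sz1 B Sz2)" and S12: "pos_def (S_T2gT1 SX B Sz2 A Sz1)"
    using pos_def_S_T2gT1 SX_pd Sz1_pd Sz2_pd by blast+
  have SY: "pos_def (S_YgT12 SX SY SYX A Sz1 B Sz2)"
    by (rule pos_def_S_YgT12[OF SX_pd Sz1_pd Sz2_pd SYgX_pd])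
  note Sz1' = pos_def_matrix_inv[OF P1_pd]
  show ?thesis
    unfolding Let_def sc_rhs_def S_YgT12_swap[of SX SY SYX B Sz2 A Sz1]
    by (intro conjI self_consistent_update_gaussian[OF ST1 S21 Sz2_pd SYgX_pd SY P1_pd]
        self_consistent_update_gaussian[OF ST2 S12 Sz1' SYgX_pd SY P2_pd])
qed

end
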